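(* Let $n\ge1$, $s\in(0,1)$, $\alpha>0$, and let $u\in L_s(\mathbb{R}^n)$ satisfy $e^{\alpha u}\in L^1(B_1)$. Then $t^{1-2s}e^{\alpha\overline{u}}\in L^1_{\mathrm{loc}}(B_1\times[0,\infty))$. Moreover: (i) there exist $\delta=\delta(n,s)>0$ and $C=C(n,s,\|u_+\|_{L_s(\mathbb{R}^n)})>0$ such that $$\|t^{1-2s}e^{\alpha\overline{u}}\|_{L^1(D_{1/2})}\leq C\left(\|e^{\alpha u}\|_{L^1(B_1)}+\|e^{\alpha u}\|_{L^1(B_1)}^{\delta}\right);$$ (ii) for every sufficiently small $\delta_0>0$ there exists $r_0=r_0(n,s,\delta_0)>0$ such that $$\int_0^{r_0}\int_{B_{1/2}}t^{1-2s}e^{\alpha\overline{u}}dxdt\leq C\left(\|e^{\alpha u}\|_{L^1(B_1)}+\|e^{\alpha u}\|_{L^1(B_1)}^{1-\delta_0}\right),$$ with $C$ depending on $n,s,\|u_+\|_{L_s(\mathbb{R}^n)}$.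
   Context: $L_s(\mathbb{R}^n)=\{u\in L^1_{\mathrm{loc}}:\|u\|_{L_s(\mathbb{R}^n)}:=\int_{\mathbb{R}^n}\frac{|u(x)|}{1+|x|^{n+2s}}dx<\infty\}$, $u_+=\max(u,0)$. For $X=(x,t)\in\mathbb{R}^n\times(0,\infty)$, $\overline{u}(X)=\int_{\mathbb{R}^n}P(X,y)u(y)dy$ with $P(X,y)=d_{n,s}\frac{t^{2s}}{|(x-y,t)|^{n+2s}}$, where $d_{n,s}>0$ is chosen so that $\int_{\mathbb{R}^n}P(X,y)dy=1$ (the Caffarelli–Silvestre extension). $B_r$ is the ball of radius $r$ centered at $0$ in $\mathbb{R}^n$, and $D_r=B^{n+1}_r(0)\cap\mathbb{R}^{n+1}_+$ where $B^{n+1}_r(0)$ is the ball in $\mathbb{R}^{n+1}$ and $\mathbb{R}^{n+1}_+=\mathbb{R}^n\times[0,\infty)$. *)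

theory Defs
  imports "HOL-Analysis.Analysis"
begin

text \<open>Points of the upper half space are pairs (x,t) :: 'a \<times> real, where 'a is R^n
  (n = DIM('a)); the norm on 'a \<times> real is the Euclidean norm sqrt(|x|^2+t^2).\<close>

definition Ls_weight :: "real \<Rightarrow> 'a::euclidean_space \<Rightarrow> real" where
  "Ls_weight s x = 1 + norm x powr (real DIM('a) + 2 * s)"

definition in_Ls :: "real \<Rightarrow> ('a::euclidean_space \<Rightarrow> real) \<Rightarrow> bool" where
  "in_Ls s u \<longleftrightarrow> integrable lborel (\<lambda>x. u x / Ls_weight s x)"

definition Ls_norm :: "real \<Rightarrow> ('a::euclidean_space \<Rightarrow> real) \<Rightarrow> real" where
  "Ls_norm s u = (\<integral>x. \<bar>u x\<bar> / Ls_weight s x \<partial>lborel)"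

definition pos_part :: "('a \<Rightarrow> real) \<Rightarrow> 'a \<Rightarrow> real" where
  "pos_part u x = max (u x) 0"

definition P0 :: "real \<Rightarrow> 'a::euclidean_space \<times> real \<Rightarrow> 'a \<Rightarrow> real" where
  "P0 s X y = snd X powr (2 * s) / norm (fst X - y, snd X) powr (real DIM('a) + 2 * s)"

text \<open>The constant d_{n,s} making the kernel integrate to 1 (by translation and scaling
  invariance it suffices to normalise at X = (0,1)).\<close>
definition d_const :: "real \<Rightarrow> 'a::euclidean_space itself \<Rightarrow> real" where
  "d_const s _ = 1 / (\<integral>y. P0 s ((0::'a), 1) y \<partial>lborel)"

definition Pker :: "real \<Rightarrow> 'a::euclidean_space \<times> real \<Rightarrow> 'a \<Rightarrow> real" where
  "Pker s X y = d_const s TYPE('a) * P0 s X y"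

definition ext :: "real \<Rightarrow> ('a::euclidean_space \<Rightarrow> real) \<Rightarrow> 'a \<times> real \<Rightarrow> real" where
  "ext s u X = (\<integral>y. Pker s X y * u y \<partial>lborel)"

definition Dhalf :: "real \<Rightarrow> ('a::euclidean_space \<times> real) set" where
  "Dhalf r = ball 0 r \<inter> {X. snd X \<ge> 0}"

definition wexp :: "real \<Rightarrow> real \<Rightarrow> ('a::euclidean_space \<Rightarrow> real) \<Rightarrow> 'a \<times> real \<Rightarrow> real" where
  "wexp s \<alpha> u X = snd X powr (1 - 2 * s) * exp (\<alpha> * ext s u X)"

definition locally_L1_on :: "('b::euclidean_space \<Rightarrow> real) \<Rightarrow> 'b set \<Rightarrow> bool" where
  "locally_L1_on f S \<longleftrightarrow> (\<forall>K. compact K \<and> K \<subseteq> S \<longrightarrow> set_integrable lborel K f)"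

definition expL1 :: "real \<Rightarrow> ('a::euclidean_space \<Rightarrow> real) \<Rightarrow> real" where
  "expL1 \<alpha> u = (\<integral>x\<in>ball 0 1. exp (\<alpha> * u x) \<partial>lborel)"

end

theory Submission
  imports Defs
begin

text \<open>
  Split the extension ubar(x,t) into the contributions of B_1 and of its complement. For |x| <= r < 1 the
  kernel is bounded on |y| >= 1 by C_r t^(2s) / (1 + |y|^(n+2s)), so the second part is at most
  C_r t^(2s) ||u_+||_(L_s). On B_1, Jensen's inequality for the kernel restricted to B_1, a
  measure of mass m(X) <= 1, gives exp (alpha int_(B_1) P u) <= (g/m)^m <= e g^m, where
  g(X) = int_(B_1) P e^(alpha u). As the kernel also has unit integral in x, Tonelli bounds the
  integral of t^(1-2s) g over a half-cylinder of height T by T^(2-2s)/(2-2s) A, where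
  A = ||e^(alpha u)||_(L^1(B_1)). It remains to bound g^m linearly in g: g^m <= 1 + g gives local
  integrability, and where m >= c, concavity of g^c gives g^m <= g + g^c <= (1 + c A^(c-1)) g + A^c.
  On D_(1/2) the mass m is bounded below by a constant delta(n,s); near t = 0 it is at least
  1 - C t^(2s), hence at least 1 - delta_0 for t <= r_0(delta_0).
\<close>

lemma divide_powr_mono:
  fixes a b c p :: real
  assumes "0 < a" "a \<le> b" "0 \<le> p" "0 \<le> c"
  shows "c / b powr p \<le> c / a powr p"
  using assms by (intro divide_left_mono powr_mono2 mult_pos_pos) auto

lemma powr_divide_exponent_le:
  fixes g m :: real
  assumes m: "0 < m" and g: "g \<ge> 0"
  shows "(g / m) powr m \<le> exp 1 * g powr m"
proof -
  have "- ln m \<le> 1 / m - 1"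
    using ln_le_minus_one[of "1 / m"] m by (simp add: ln_div)
  then have "- (m * ln m) \<le> 1"
    using m mult_left_mono[of "- ln m" "1 / m - 1" m] by (simp add: algebra_simps)
  then have "exp (- (m * ln m)) \<le> exp 1"
    by simp
  then have "1 / m powr m \<le> exp 1"
    using m by (simp add: powr_def exp_minus inverse_eq_divide)
  then have "g powr m * (1 / m powr m) \<le> g powr m * exp 1"
    by (intro mult_left_mono) auto
  then show ?thesis
    using m g by (simp add: powr_divide field_simps)
qed

lemma powr_le_add_powr:
  fixes g m c :: real
  assumes c: "0 < c" "c \<le> m" "m \<le> 1" and g: "g \<ge> 0"
  shows "g powr m \<le> g + g powr c"
proof (cases "g \<ge> 1")
  case True
  then have "g powr m \<le> g powr 1" using c by (intro powr_mono) auto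
  then have "g powr m \<le> g" using True by simp
  then show ?thesis using powr_ge_zero[of g c] by linarith
next
  case False
  then have "g powr m \<le> g powr c" using c g by (intro powr_mono') auto
  then show ?thesis using g by simp
qed

lemma powr_le_one_add:
  fixes g m :: real
  assumes m: "0 \<le> m" "m \<le> 1" and g: "g \<ge> 0"
  shows "g powr m \<le> 1 + g"
proof (cases "g \<ge> 1")
  case True
  then have "g powr m \<le> g powr 1" using m by (intro powr_mono) auto
  then show ?thesis using True by simp
next
  case False
  then have "g powr m \<le> 1 powr m" using m g by (intro powr_mono2) auto
  then show ?thesis using g by simp
qed

lemma powr_le_tangent_line:
  fixes g c A :: real
  assumes c: "0 < c" "c \<le> 1" and A: "A > 0" and g: "g \<ge> 0"
  shows "g powr c \<le> A powr c + c * A powr (c - 1) * g"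
proof (cases "g = 0")
  case True
  then show ?thesis by simp
next
  case False
  then have g: "g > 0" using g by simp
  have "(g / A) powr c * 1 powr (1 - c) \<le> c * (g / A) + (1 - c) * 1"
    using c A g by (intro Youngs_inequality_0) auto
  then have "(g / A) powr c \<le> c * (g / A) + (1 - c)"
    by simp
  then have "A powr c * (g / A) powr c \<le> A powr c * (c * (g / A) + (1 - c))"
    by (intro mult_left_mono) auto
  moreover have "A powr c * (g / A) powr c = g powr c"
    using A g by (simp add: powr_divide)
  moreover have "A powr c * (c * (g / A) + (1 - c)) = c * A powr (c - 1) * g + (1 - c) * A powr c"
    using A by (simp add: powr_diff field_simps)
  moreover have "(1 - c) * A powr c \<le> A powr c"
    using c by (simp add: algebra_simps)
  ultimately show ?thesis by linarith
qed

lemma powr_le_affine_bound: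
  fixes g m c A :: real
  assumes c: "0 < c" "c \<le> m" "m \<le> 1" and A: "A > 0" and g: "g \<ge> 0"
  shows "g powr m \<le> (1 + c * A powr (c - 1)) * g + A powr c"
proof -
  have "g powr m \<le> g + g powr c"
    using c g by (rule powr_le_add_powr)
  also have "\<dots> \<le> g + (A powr c + c * A powr (c - 1) * g)"
    using powr_le_tangent_line[OF _ _ A g] c by simp
  finally show ?thesis by (simp add: algebra_simps)
qed

lemma Jensen_exp:
  fixes k f :: "'b \<Rightarrow> real"
  assumes k0: "\<And>y. k y \<ge> 0" and ik: "integrable M k" and ikf: "integrable M (\<lambda>y. k y * f y)"
    and ike: "integrable M (\<lambda>y. k y * exp (\<alpha> * f y))" and m: "integral\<^sup>L M k > 0"
  shows "exp (\<alpha> * ((\<integral>y. k y * f y \<partial>M) / integral\<^sup>L M k)) \<le> (\<integral>y. k y * exp (\<alpha> * f y) \<partial>M) / integral\<^sup>L M k"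
proof -
  define b where "b = (\<integral>y. k y * f y \<partial>M) / integral\<^sup>L M k"
  define c1 where "c1 = exp (\<alpha> * b) * (1 - \<alpha> * b)"
  define c2 where "c2 = exp (\<alpha> * b) * \<alpha>"
  have tangent: "c1 * k y + c2 * (k y * f y) \<le> k y * exp (\<alpha> * f y)" for y
  proof -
    have "exp (\<alpha> * b) * (1 + \<alpha> * (f y - b)) \<le> exp (\<alpha> * b) * exp (\<alpha> * (f y - b))"
      by (intro mult_left_mono exp_ge_add_one_self) auto
    then have "k y * (exp (\<alpha> * b) * (1 + \<alpha> * (f y - b))) \<le> k y * exp (\<alpha> * f y)"
      using k0[of y] by (intro mult_left_mono) (auto simp flip: exp_add simp: algebra_simps)
    then show ?thesis by (simp add: c1_def c2_def algebra_simps)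
  qed
  have "exp (\<alpha> * b) * integral\<^sup>L M k = c1 * integral\<^sup>L M k + c2 * (\<integral>y. k y * f y \<partial>M)"
    using m by (simp add: c1_def c2_def b_def field_simps)
  also have "\<dots> = (\<integral>y. c1 * k y + c2 * (k y * f y) \<partial>M)"
    using ik ikf by simp
  also have "\<dots> \<le> (\<integral>y. k y * exp (\<alpha> * f y) \<partial>M)"
    using ik ikf ike tangent by (intro integral_mono) auto
  finally show ?thesis
    using m by (simp add: b_def field_simps)
qed

section \<open>The Poisson kernel\<close>

lemma norm_Pair_uminus: "norm (- z, t) = norm (z::'a::real_normed_vector, t::'b::real_normed_vector)"
  by (simp add: norm_Pair)

lemma norm_Pair_one_ge_1: "1 \<le> norm (z::'a::real_normed_vector, 1::real)"
  using norm_snd_le[of "1::real" z] by simp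

lemma norm_Pair_one_le_sqrt2:
  assumes "norm y \<ge> 1"
  shows "norm (y::'a::real_normed_vector, 1::real) \<le> sqrt 2 * norm y"
proof -
  have "(norm y)\<^sup>2 + 1 \<le> 2 * (norm y)\<^sup>2"
    using assms by (simp add: one_le_power)
  then have "sqrt ((norm y)\<^sup>2 + 1) \<le> sqrt (2 * (norm y)\<^sup>2)"
    by (rule real_sqrt_le_mono)
  then show ?thesis
    by (simp add: norm_Pair real_sqrt_mult)
qed

lemma P0_nonneg: "0 \<le> P0 s X y"
  unfolding P0_def by simp

lemma P0_origin: "P0 s (0, 1) z = 1 / norm (z::'a::euclidean_space, 1::real) powr (real DIM('a) + 2 * s)"
  unfolding P0_def by (simp add: norm_Pair_uminus)

lemma P0_rescale:
  fixes x y :: "'a::euclidean_space"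
  assumes t: "t > 0"
  shows "t ^ DIM('a) * P0 s (x, t) y = P0 s (0, 1) ((y - x) /\<^sub>R t)"
proof -
  let ?p = "real DIM('a) + 2 * s" and ?z = "(y - x) /\<^sub>R t"
  have "(x - y, t) = t *\<^sub>R (- ?z, 1)"
    using t by (simp add: algebra_simps)
  then have "norm (x - y, t) = \<bar>t\<bar> * norm (- ?z, 1::real)"
    by (metis norm_scaleR)
  then have "norm (x - y, t) = t * norm (?z, 1::real)"
    using t by (simp add: norm_Pair_uminus)
  then have "norm (x - y, t) powr ?p = t ^ DIM('a) * t powr (2 * s) * norm (?z, 1::real) powr ?p"
    using t by (simp add: powr_mult powr_add powr_realpow)
  then show ?thesis
    using t norm_Pair_one_ge_1[of ?z] by (simp add: P0_def norm_Pair_uminus)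
qed

lemma ball_in_sets_borel [measurable]: "ball (c::'a::euclidean_space) r \<in> sets borel"
  by simp

lemma P0_measurable [measurable]: "(\<lambda>p. P0 s (fst p) (snd p :: 'a::euclidean_space)) \<in> borel_measurable borel"
  unfolding P0_def by (simp only: borel_prod[symmetric]) measurable

lemma P0_measurable_y [measurable]: "P0 s (X::'a::euclidean_space \<times> real) \<in> borel_measurable borel"
  unfolding P0_def by measurable

lemma P0_measurable_x [measurable]: "(\<lambda>x. P0 s (x, t) (y::'a::euclidean_space)) \<in> borel_measurable borel"
  unfolding P0_def by measurable

lemma nn_integral_P0_y:
  fixes x :: "'a::euclidean_space"
  assumes t: "t > 0"
  shows "(\<integral>\<^sup>+y. ennreal (P0 s (x, t) y) \<partial>lborel) = (\<integral>\<^sup>+z. ennreal (P0 s (0::'a, 1) z) \<partial>lborel)"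
proof -
  have "(\<integral>\<^sup>+y. ennreal (P0 s (x, t) y) \<partial>lborel)
      = (\<integral>\<^sup>+z. ennreal (t ^ DIM('a)) * ennreal (P0 s (x, t) (x + t *\<^sub>R z)) \<partial>lborel)"
    using t by (subst lborel_affine[of t x]) (simp_all add: nn_integral_density nn_integral_distr)
  also have "\<dots> = (\<integral>\<^sup>+z. ennreal (P0 s (0::'a, 1) z) \<partial>lborel)"
  proof (intro nn_integral_cong)
    fix z :: 'a
    show "ennreal (t ^ DIM('a)) * ennreal (P0 s (x, t) (x + t *\<^sub>R z)) = ennreal (P0 s (0, 1) z)"
      using t P0_rescale[OF t, where x=x and y="x + t *\<^sub>R z" and s=s]
      by (simp add: P0_nonneg flip: ennreal_mult)
  qed
  finally show ?thesis .
qed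

lemma nn_integral_P0_x:
  fixes y :: "'a::euclidean_space"
  assumes t: "t > 0"
  shows "(\<integral>\<^sup>+x. ennreal (P0 s (x, t) y) \<partial>lborel) = (\<integral>\<^sup>+z. ennreal (P0 s (0::'a, 1) z) \<partial>lborel)"
proof -
  have "(\<integral>\<^sup>+x. ennreal (P0 s (x, t) y) \<partial>lborel)
      = (\<integral>\<^sup>+z. ennreal (t ^ DIM('a)) * ennreal (P0 s (y - t *\<^sub>R z, t) y) \<partial>lborel)"
    using t by (subst lborel_affine[of "-t" y]) (simp_all add: nn_integral_density nn_integral_distr)
  also have "\<dots> = (\<integral>\<^sup>+z. ennreal (P0 s (0::'a, 1) z) \<partial>lborel)"
  proof (intro nn_integral_cong)
    fix z :: 'a
    show "ennreal (t ^ DIM('a)) * ennreal (P0 s (y - t *\<^sub>R z, t) y) = ennreal (P0 s (0, 1) z)"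
      using t P0_rescale[OF t, where x="y - t *\<^sub>R z" and y=y and s=s]
      by (simp add: P0_nonneg flip: ennreal_mult)
  qed
  finally show ?thesis .
qed

lemma norm_Pair_one_powr_le_dyadic:
  fixes y :: "'a::euclidean_space"
  assumes p: "p \<ge> 0"
  shows "ennreal (1 / norm (y, 1::real) powr p)
    \<le> (\<Sum>j. ennreal (2 powr (p - real j * p)) * indicator (ball 0 (2 ^ j)) y)"
proof -
  define \<rho> where "\<rho> = norm (y, 1::real)"
  have \<rho>1: "\<rho> \<ge> 1" unfolding \<rho>_def by (rule norm_Pair_one_ge_1)
  define L where "L = log 2 \<rho>"
  have L0: "L \<ge> 0" using \<rho>1 by (simp add: L_def)
  define j where "j = nat \<lfloor>L\<rfloor> + 1"
  have "2 powr (real j - 1) \<le> 2 powr L"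
    using L0 by (simp add: j_def)
  then have lower: "2 powr (real j - 1) \<le> \<rho>"
    using \<rho>1 by (simp add: L_def)
  have "\<rho> = 2 powr L" using \<rho>1 by (simp add: L_def)
  also have "\<dots> < 2 powr real j" using L0 by (simp add: j_def) linarith
  finally have "y \<in> ball 0 (2 ^ j)"
    using norm_fst_le[of y "1::real"] by (simp add: \<rho>_def powr_realpow)
  moreover have "1 / \<rho> powr p \<le> 2 powr (p - real j * p)"
  proof -
    have "1 / \<rho> powr p \<le> 1 / (2 powr (real j - 1)) powr p"
      using lower p by (intro divide_left_mono powr_mono2 mult_pos_pos) auto
    also have "\<dots> = 2 powr (p - real j * p)"
      by (simp add: powr_powr algebra_simps flip: powr_minus powr_minus_divide)
    finally show ?thesis .
  qed
  ultimately have "ennreal (1 / \<rho> powr p) \<le> ennreal (2 powr (p - real j * p)) * indicator (ball 0 (2 ^ j)) y"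
    by (simp add: ennreal_leI)
  also have "\<dots> \<le> (\<Sum>i. ennreal (2 powr (p - real i * p)) * indicator (ball 0 (2 ^ i)) y)"
  proof -
    have "(\<Sum>i\<in>{j}. ennreal (2 powr (p - real i * p)) * indicator (ball 0 (2 ^ i)) y)
        \<le> (\<Sum>i. ennreal (2 powr (p - real i * p)) * indicator (ball 0 (2 ^ i)) y)"
      by (intro sum_le_suminf summableI) auto
    then show ?thesis by (simp only: sum.insert finite.emptyI empty_iff sum.empty add_0_right not_False_eq_True)
  qed
  finally show ?thesis by (simp add: \<rho>_def)
qed

lemma nn_integral_norm_Pair_one_powr_finite:
  assumes p: "p > real DIM('a::euclidean_space)"
  shows "(\<integral>\<^sup>+y. ennreal (1 / norm (y::'a, 1::real) powr p) \<partial>lborel) < \<infinity>"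
proof -
  define V where "V = unit_ball_vol (real DIM('a))"
  define q where "q = 2 ^ DIM('a) / (2::real) powr p"
  have "(2::real) ^ DIM('a) < 2 powr p"
    using p by (simp flip: powr_realpow)
  then have q: "0 < q" "q < 1" by (auto simp: q_def)
  have vol: "2 powr (p - real j * p) * (V * (2 ^ j) ^ DIM('a)) = V * 2 powr p * q ^ j" for j :: nat
  proof -
    have "2 powr (p - real j * p) = 2 powr p / (2 powr p) ^ j"
      by (simp add: powr_diff powr_power)
    moreover have "((2::real) ^ j) ^ DIM('a) = (2 ^ DIM('a)) ^ j"
      by (metis power_mult mult.commute)
    ultimately show ?thesis by (simp add: q_def power_divide)
  qed
  have "(\<integral>\<^sup>+y. ennreal (1 / norm (y::'a, 1::real) powr p) \<partial>lborel)
      \<le> (\<integral>\<^sup>+y. (\<Sum>j. ennreal (2 powr (p - real j * p)) * indicator (ball (0::'a) (2 ^ j)) y) \<partial>lborel)"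
    using p by (intro nn_integral_mono norm_Pair_one_powr_le_dyadic) simp
  also have "\<dots> = (\<Sum>j. (\<integral>\<^sup>+y. ennreal (2 powr (p - real j * p)) * indicator (ball (0::'a) (2 ^ j)) y \<partial>lborel))"
    by (intro nn_integral_suminf) measurable
  also have "\<dots> = (\<Sum>j. ennreal (2 powr (p - real j * p)) * emeasure lborel (ball (0::'a) (2 ^ j)))"
    by (rule suminf_cong, rule nn_integral_cmult_indicator) simp
  also have "\<dots> = (\<Sum>j. ennreal (2 powr (p - real j * p) * (V * (2 ^ j) ^ DIM('a))))"
    by (rule suminf_cong) (simp add: emeasure_ball V_def ennreal_mult)
  also have "\<dots> = (\<Sum>j. ennreal (V * 2 powr p * q ^ j))"
    by (simp only: vol)
  also have "\<dots> = ennreal (\<Sum>j. V * 2 powr p * q ^ j)"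
    using q by (intro suminf_ennreal2) (auto simp: V_def intro!: summable_mult summable_geometric)
  finally show ?thesis by (simp add: le_less_trans)
qed

lemma P0_origin_integrable:
  assumes "s > 0"
  shows "integrable lborel (P0 s (0::'a::euclidean_space, 1))"
  using nn_integral_norm_Pair_one_powr_finite[of "real DIM('a) + 2 * s", where 'a='a] assms
  by (intro integrableI_nonneg) (auto simp: P0_nonneg P0_origin)

lemma nn_integral_P0_origin:
  assumes "s > 0"
  shows "(\<integral>\<^sup>+z. ennreal (P0 s (0::'a::euclidean_space, 1) z) \<partial>lborel) = ennreal (\<integral>z. P0 s (0::'a, 1) z \<partial>lborel)"
  using P0_origin_integrable[OF assms] by (intro nn_integral_eq_integral) (auto simp: P0_nonneg)

lemma integral_P0_origin_pos:
  assumes s: "s > 0"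
  shows "0 < (\<integral>z. P0 s (0::'a::euclidean_space, 1) z \<partial>lborel)"
proof -
  let ?p = "real DIM('a) + 2 * s"
  have "1 / 2 powr ?p \<le> P0 s (0::'a, 1) z" if "z \<in> ball 0 1" for z :: 'a
  proof -
    have "(norm z)\<^sup>2 < 1" using that by (simp add: abs_square_less_1)
    then have "norm (z, 1::real) \<le> 2" by (simp add: norm_Pair real_sqrt_le_iff')
    then show ?thesis
      unfolding P0_origin using s norm_Pair_one_ge_1[of z]
      by (intro divide_left_mono powr_mono2 mult_pos_pos) auto
  qed
  then have "ennreal (1 / 2 powr ?p) * emeasure lborel (ball (0::'a) 1)
      \<le> (\<integral>\<^sup>+z. ennreal (P0 s (0::'a, 1) z) \<partial>lborel)"
    by (subst nn_integral_cmult_indicator[symmetric]) (auto intro!: nn_integral_mono simp: indicator_def ennreal_leI)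
  moreover have "0 < ennreal (1 / 2 powr ?p) * emeasure lborel (ball (0::'a) 1)"
    by (simp add: emeasure_ball flip: ennreal_mult)
  ultimately have "0 < ennreal (\<integral>z. P0 s (0::'a, 1) z \<partial>lborel)"
    using nn_integral_P0_origin[OF s, where 'a='a] by (metis order_less_le_trans)
  then show ?thesis by simp
qed

lemma d_const_pos: "s > 0 \<Longrightarrow> d_const s TYPE('a::euclidean_space) > 0"
  unfolding d_const_def using integral_P0_origin_pos[of s, where 'a='a] by simp

lemma Pker_nonneg: "s > 0 \<Longrightarrow> 0 \<le> Pker s (X::'a::euclidean_space \<times> real) y"
  unfolding Pker_def using d_const_pos[of s, where 'a='a] P0_nonneg[of s X y] by simp

lemma Pker_measurable [measurable]: "(\<lambda>p. Pker s (fst p) (snd p :: 'a::euclidean_space)) \<in> borel_measurable borel"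
  unfolding Pker_def by measurable

lemma Pker_measurable_y [measurable]: "Pker s (X::'a::euclidean_space \<times> real) \<in> borel_measurable borel"
  unfolding Pker_def by measurable

lemma Pker_measurable_X [measurable]: "(\<lambda>X. Pker s X (y::'a::euclidean_space)) \<in> borel_measurable borel"
  unfolding Pker_def P0_def by (simp only: borel_prod[symmetric]) measurable

lemma Pker_measurable_X_pair [measurable]:
  "(\<lambda>X. Pker s X (y::'a::euclidean_space)) \<in> borel_measurable (lborel \<Otimes>\<^sub>M lborel)"
  by (simp only: lborel_prod) simp

lemma Pker_measurable_pair [measurable]:
  "(\<lambda>p. Pker s (fst p) (snd p :: 'a::euclidean_space)) \<in> borel_measurable (lborel \<Otimes>\<^sub>M lborel)"
  by (simp only: lborel_prod) measurable

lemma nn_integral_Pker_y: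
  assumes s: "s > 0" and t: "t > 0"
  shows "(\<integral>\<^sup>+y. ennreal (Pker s (x::'a::euclidean_space, t) y) \<partial>lborel) = 1"
proof -
  have "(\<integral>\<^sup>+y. ennreal (Pker s (x, t) y) \<partial>lborel) = ennreal (d_const s TYPE('a)) * (\<integral>\<^sup>+y. ennreal (P0 s (x, t) y) \<partial>lborel)"
    unfolding Pker_def using d_const_pos[OF s, where 'a='a]
    by (subst nn_integral_cmult[symmetric]) (auto simp: ennreal_mult' less_imp_le)
  also have "\<dots> = 1"
    using nn_integral_P0_y[OF t, of s x] nn_integral_P0_origin[OF s, where 'a='a] integral_P0_origin_pos[OF s, where 'a='a]
    by (simp add: d_const_def flip: ennreal_mult)
  finally show ?thesis .
qed

lemma nn_integral_Pker_x_le: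
  assumes s: "s > 0" and t: "t \<ge> 0"
  shows "(\<integral>\<^sup>+x. ennreal (Pker s (x::'a::euclidean_space, t) y) \<partial>lborel) \<le> 1"
proof (cases "t = 0")
  case True
  then show ?thesis by (simp add: Pker_def P0_def)
next
  case False
  then have t: "t > 0" using t by simp
  have "(\<integral>\<^sup>+x. ennreal (Pker s (x, t) y) \<partial>lborel) = ennreal (d_const s TYPE('a)) * (\<integral>\<^sup>+x. ennreal (P0 s (x, t) y) \<partial>lborel)"
    unfolding Pker_def using d_const_pos[OF s, where 'a='a]
    by (subst nn_integral_cmult[symmetric]) (auto simp: ennreal_mult' less_imp_le)
  also have "\<dots> = 1"
    using nn_integral_P0_x[OF t, of s y] nn_integral_P0_origin[OF s, where 'a='a] integral_P0_origin_pos[OF s, where 'a='a]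
    by (simp add: d_const_def flip: ennreal_mult)
  finally show ?thesis by simp
qed

lemma P0_le:
  assumes t: "t > 0" and s: "s > 0"
  shows "P0 s (x::'a::euclidean_space, t) y \<le> t powr (2 * s) / t powr (real DIM('a) + 2 * s)"
  unfolding P0_def fst_conv snd_conv using t s norm_snd_le[of t "x - y"]
  by (intro divide_powr_mono) auto

lemma P0_ge_near:
  fixes x y :: "'a::euclidean_space"
  assumes t: "t > 0" and s: "s > 0" and y: "y \<in> ball x t"
  shows "t powr (2 * s) / (sqrt 2 * t) powr (real DIM('a) + 2 * s) \<le> P0 s (x, t) y"
proof -
  have "(norm (x - y))\<^sup>2 \<le> t\<^sup>2"
    using y t by (simp add: dist_norm power_mono)
  then have "norm (x - y, t) \<le> sqrt (2 * t\<^sup>2)"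
    by (simp add: norm_Pair real_sqrt_le_mono)
  also have "\<dots> = sqrt 2 * t"
    using t by (simp add: real_sqrt_mult)
  finally show ?thesis
    unfolding P0_def fst_conv snd_conv using t s norm_snd_le[of t "x - y"]
    by (intro divide_powr_mono) auto
qed

lemma P0_le_far:
  fixes x y :: "'a::euclidean_space"
  assumes t: "t > 0" and s: "s > 0" and r: "0 \<le> r" "r < 1" and x: "norm x \<le> r" and y: "norm y \<ge> 1"
  shows "P0 s (x, t) y \<le> (sqrt 2 / (1 - r)) powr (real DIM('a) + 2 * s) * t powr (2 * s) * P0 s (0, 1) y"
proof -
  let ?p = "real DIM('a) + 2 * s"
  define \<kappa> where "\<kappa> = (1 - r) / sqrt 2"
  have \<kappa>: "\<kappa> > 0" using r by (simp add: \<kappa>_def)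
  have "\<kappa> * norm (y, 1::real) \<le> (1 - r) * norm y"
    using mult_left_mono[OF norm_Pair_one_le_sqrt2[OF y] less_imp_le[OF \<kappa>]] by (simp add: \<kappa>_def)
  also have "\<dots> = norm y - r * norm y"
    by (simp add: algebra_simps)
  also have "\<dots> \<le> norm y - norm x"
    using x mult_left_mono[OF y r(1)] by simp
  also have "\<dots> \<le> norm (x - y, t)"
    using norm_triangle_ineq3[of y x] norm_fst_le[of "x - y" t] by (simp add: norm_minus_commute)
  finally have \<rho>: "\<kappa> * norm (y, 1::real) \<le> norm (x - y, t)" .
  have "P0 s (x, t) y \<le> t powr (2 * s) / (\<kappa> * norm (y, 1::real)) powr ?p"
    unfolding P0_def fst_conv snd_conv using \<rho> \<kappa> s norm_Pair_one_ge_1[of y]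
    by (intro divide_powr_mono mult_pos_pos) auto
  also have "\<dots> = t powr (2 * s) / (\<kappa> powr ?p * norm (y, 1::real) powr ?p)"
    using \<kappa> by (simp add: powr_mult)
  also have "\<dots> = (sqrt 2 / (1 - r)) powr ?p * t powr (2 * s) * P0 s (0, 1) y"
  proof -
    have "(sqrt 2 / (1 - r)) powr ?p = 1 / \<kappa> powr ?p"
      using r by (simp add: \<kappa>_def powr_divide)
    then show ?thesis by (simp add: P0_origin)
  qed
  finally show ?thesis .
qed

lemma P0_origin_le_Ls_weight:
  assumes s: "s > 0"
  shows "P0 s (0, 1) y \<le> 2 / Ls_weight s (y::'a::euclidean_space)"
proof -
  let ?p = "real DIM('a) + 2 * s" and ?\<nu> = "norm (y, 1::real)"
  have a: "1 \<le> ?\<nu> powr ?p"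
    using norm_Pair_one_ge_1[of y] s by (intro ge_one_powr_ge_zero) auto
  have b: "norm y powr ?p \<le> ?\<nu> powr ?p"
    using s by (intro powr_mono2) (auto simp: norm_fst_le)
  have "Ls_weight s y \<le> 2 * ?\<nu> powr ?p"
    unfolding Ls_weight_def using a b by simp
  moreover have "Ls_weight s y > 0"
    unfolding Ls_weight_def by (simp add: add_pos_nonneg)
  ultimately have "2 / (2 * ?\<nu> powr ?p) \<le> 2 / Ls_weight s y"
    using a by (intro divide_left_mono) (auto intro!: mult_pos_pos)
  then show ?thesis
    by (simp add: P0_origin)
qed

lemma P0_le_P0_origin:
  fixes x y :: "'a::euclidean_space"
  assumes t: "t > 0" and s: "s > 0"
  shows "P0 s (x, t) y \<le> t powr (2 * s) * (1 + (1 + norm x) / t) powr (real DIM('a) + 2 * s) * P0 s (0, 1) y"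
proof -
  let ?p = "real DIM('a) + 2 * s" and ?c = "1 + (1 + norm x) / t" and ?\<rho> = "norm (x - y, t)"
  have c: "?c > 0" using t by (simp add: add_pos_nonneg)
  have \<rho>t: "t \<le> ?\<rho>" using norm_snd_le[of t "x - y"] t by simp
  have "norm (y, 1::real) \<le> norm y + 1"
    using norm_Pair_le[of y "1::real"] by simp
  also have "\<dots> \<le> norm (x - y) + (1 + norm x)"
    using norm_triangle_ineq3[of x y] by (simp add: norm_minus_commute)
  also have "\<dots> \<le> ?\<rho> + (1 + norm x) / t * ?\<rho>"
  proof -
    have "1 + norm x = (1 + norm x) / t * t" using t by simp
    also have "\<dots> \<le> (1 + norm x) / t * ?\<rho>" using \<rho>t t by (intro mult_left_mono) auto
    finally show ?thesis using norm_fst_le[of "x - y" t] by linarith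
  qed
  finally have "norm (y, 1::real) / ?c \<le> ?\<rho>"
    using c by (simp add: field_simps)
  then have "P0 s (x, t) y \<le> t powr (2 * s) / (norm (y, 1::real) / ?c) powr ?p"
    unfolding P0_def fst_conv snd_conv using c s norm_Pair_one_ge_1[of y]
    by (intro divide_powr_mono divide_pos_pos) auto
  then show ?thesis
    using c norm_Pair_one_ge_1[of y] by (simp add: P0_origin powr_divide)
qed

section \<open>Functions in \<open>L\<^sub>s\<close>\<close>

lemma Ls_weight_pos: "0 < Ls_weight s y"
  unfolding Ls_weight_def by (simp add: add_pos_nonneg)

lemma Ls_weight_neq_0 [simp]: "Ls_weight s y \<noteq> 0"
  using Ls_weight_pos[of s y] by simp

lemma abs_Ls_weight [simp]: "\<bar>Ls_weight s y\<bar> = Ls_weight s y"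
  using Ls_weight_pos[of s y] by simp

lemma Ls_weight_measurable [measurable]: "Ls_weight s \<in> borel_measurable borel"
  unfolding Ls_weight_def[abs_def] by measurable

lemma in_Ls_measurable:
  assumes "in_Ls s u"
  shows "u \<in> borel_measurable borel"
proof -
  have [measurable]: "(\<lambda>x. u x / Ls_weight s x) \<in> borel_measurable borel"
    using assms unfolding in_Ls_def by (simp add: borel_measurable_integrable)
  have "(\<lambda>x. u x / Ls_weight s x * Ls_weight s x) \<in> borel_measurable borel"
    by measurable
  then show ?thesis by simp
qed

lemma in_Ls_abs_integrable:
  assumes "in_Ls s u"
  shows "integrable lborel (\<lambda>y. \<bar>u y\<bar> / Ls_weight s y)"
  using integrable_abs[OF assms[unfolded in_Ls_def]] by simp

lemma in_Ls_pos_part_integrable: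
  assumes u: "in_Ls s u"
  shows "integrable lborel (\<lambda>y. pos_part u y / Ls_weight s y)"
proof (rule Bochner_Integration.integrable_bound[OF in_Ls_abs_integrable[OF u]])
  have [measurable]: "u \<in> borel_measurable borel" using in_Ls_measurable[OF u] .
  show "(\<lambda>y. pos_part u y / Ls_weight s y) \<in> borel_measurable lborel"
    unfolding pos_part_def by measurable
  show "AE y in lborel. norm (pos_part u y / Ls_weight s y) \<le> norm (\<bar>u y\<bar> / Ls_weight s y)"
  proof (intro AE_I2)
    fix y
    have "max (u y) 0 / Ls_weight s y \<le> \<bar>u y\<bar> / Ls_weight s y"
      using Ls_weight_pos[of s y] by (intro divide_right_mono) auto
    then show "norm (pos_part u y / Ls_weight s y) \<le> norm (\<bar>u y\<bar> / Ls_weight s y)"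
      by (simp add: pos_part_def)
  qed
qed

lemma Ls_norm_pos_part: "Ls_norm s (pos_part u) = (\<integral>y. pos_part u y / Ls_weight s y \<partial>lborel)"
  unfolding Ls_norm_def by (intro Bochner_Integration.integral_cong) (auto simp: pos_part_def)

lemma Pker_mult_integrable:
  fixes x :: "'a::euclidean_space"
  assumes s: "s > 0" and t: "t > 0" and u: "in_Ls s u"
  shows "integrable lborel (\<lambda>y. Pker s (x, t) y * u y)"
proof -
  define K0 where "K0 = t powr (2 * s) * (1 + (1 + norm x) / t) powr (real DIM('a) + 2 * s)"
  define K where "K = d_const s TYPE('a) * K0 * 2"
  have [measurable]: "u \<in> borel_measurable borel" using in_Ls_measurable[OF u] .
  have "Pker s (x, t) y \<le> K / Ls_weight s y" for y
  proof -
    have "P0 s (x, t) y \<le> K0 * P0 s (0, 1) y"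
      using P0_le_P0_origin[OF t s, of x y] by (simp add: K0_def)
    also have "\<dots> \<le> K0 * (2 / Ls_weight s y)"
      using P0_origin_le_Ls_weight[OF s, of y] by (intro mult_left_mono) (auto simp: K0_def)
    finally have "d_const s TYPE('a) * P0 s (x, t) y \<le> d_const s TYPE('a) * (K0 * (2 / Ls_weight s y))"
      using d_const_pos[OF s, where 'a='a] by (intro mult_left_mono) auto
    then show ?thesis by (simp add: Pker_def K_def)
  qed
  moreover have "K \<ge> 0"
    unfolding K_def K0_def using d_const_pos[OF s, where 'a='a] by simp
  ultimately have bound: "norm (Pker s (x, t) y * u y) \<le> norm (K * (\<bar>u y\<bar> / Ls_weight s y))" for y
    using Pker_nonneg[OF s, of "(x, t)" y] mult_right_mono[of "Pker s (x, t) y" "K / Ls_weight s y" "\<bar>u y\<bar>"]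
    by (simp add: abs_mult)
  show ?thesis
  proof (rule Bochner_Integration.integrable_bound[OF integrable_mult_right[OF in_Ls_abs_integrable[OF u]]])
    show "(\<lambda>y. Pker s (x, t) y * u y) \<in> borel_measurable lborel"
      by measurable
    show "AE y in lborel. norm (Pker s (x, t) y * u y) \<le> norm (K * (\<bar>u y\<bar> / Ls_weight s y))"
      using bound by simp
  qed
qed

lemma Pker_indicator_integrable:
  fixes x :: "'a::euclidean_space"
  assumes s: "s > 0" and t: "t > 0" and f: "set_integrable lborel A f"
  shows "integrable lborel (\<lambda>y. indicator A y * Pker s (x, t) y * f y)"
proof -
  define K where "K = d_const s TYPE('a) * (t powr (2 * s) / t powr (real DIM('a) + 2 * s))"
  have Af[measurable]: "(\<lambda>y. indicator A y * f y) \<in> borel_measurable lborel"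
    using f unfolding set_integrable_def by (simp add: borel_measurable_integrable)
  have K0: "K \<ge> 0"
    unfolding K_def using d_const_pos[OF s, where 'a='a] by simp
  have "Pker s (x, t) y \<le> K" for y
    unfolding Pker_def K_def using P0_le[OF t s, of x y] d_const_pos[OF s, where 'a='a]
    by (intro mult_left_mono) auto
  then have "norm (indicator A y * Pker s (x, t) y * f y) \<le> norm (K * (indicator A y * f y))" for y
    using Pker_nonneg[OF s, of "(x, t)" y] K0 by (auto simp: abs_mult indicator_def mult_right_mono)
  then have bound: "AE y in lborel. norm (indicator A y * Pker s (x, t) y * f y) \<le> norm (K * (indicator A y * f y))"
    by simp
  have "integrable lborel (\<lambda>y. K * (indicator A y * f y))"
    using f unfolding set_integrable_def by (intro integrable_mult_right) simp
  moreover have "(\<lambda>y. indicator A y * Pker s (x, t) y * f y) \<in> borel_measurable lborel"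
  proof -
    have "(\<lambda>y. Pker s (x, t) y * (indicator A y * f y)) \<in> borel_measurable lborel"
      by measurable
    then show ?thesis by (simp add: mult_ac)
  qed
  ultimately show ?thesis
    using bound by (rule Bochner_Integration.integrable_bound)
qed

lemma nn_integral_ball_exp:
  assumes "set_integrable lborel (ball 0 1) (\<lambda>x. exp (\<alpha> * u x))"
  shows "(\<integral>\<^sup>+y. ennreal (indicator (ball (0::'a::euclidean_space) 1) y * exp (\<alpha> * u y)) \<partial>lborel) = ennreal (expL1 \<alpha> u)"
  using assms unfolding expL1_def set_lebesgue_integral_def set_integrable_def
  by (subst nn_integral_eq_integral) auto

lemma expL1_pos:
  fixes u :: "'a::euclidean_space \<Rightarrow> real"
  assumes u: "in_Ls s u" and e: "set_integrable lborel (ball 0 1) (\<lambda>x. exp (\<alpha> * u x))"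
  shows "expL1 \<alpha> u > 0"
proof (rule ccontr)
  have [measurable]: "u \<in> borel_measurable borel" using in_Ls_measurable[OF u] .
  assume "\<not> expL1 \<alpha> u > 0"
  moreover have "0 \<le> expL1 \<alpha> u"
    unfolding expL1_def set_lebesgue_integral_def by (intro integral_nonneg_AE) (auto simp: indicator_def)
  ultimately have "(\<integral>\<^sup>+y. ennreal (indicator (ball (0::'a) 1) y * exp (\<alpha> * u y)) \<partial>lborel) = 0"
    using nn_integral_ball_exp[OF e] by simp
  then have "AE y in lborel. ennreal (indicator (ball (0::'a) 1) y * exp (\<alpha> * u y)) = 0"
    by (subst (asm) nn_integral_0_iff_AE) auto
  then have "AE y in lborel. y \<notin> ball (0::'a) 1"
    by (rule AE_mp) (auto intro!: AE_I2 simp: indicator_def)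
  then have "ball (0::'a) 1 \<in> null_sets lborel"
    by (subst AE_iff_null_sets) auto
  then have "emeasure lborel (ball (0::'a) 1) = 0"
    by auto
  then show False
    using unit_ball_vol_pos[of "real DIM('a)"] by (simp add: emeasure_ball)
qed

section \<open>Mass of the kernel on the unit ball\<close>

definition ball_mass :: "real \<Rightarrow> 'a::euclidean_space \<times> real \<Rightarrow> real" where
  "ball_mass s X = (\<integral>y. indicator (ball 0 1) y * Pker s X y \<partial>lborel)"

definition ball_exp_mass :: "real \<Rightarrow> real \<Rightarrow> ('a::euclidean_space \<Rightarrow> real) \<Rightarrow> 'a \<times> real \<Rightarrow> real" where
  "ball_exp_mass s \<alpha> u X = (\<integral>y. indicator (ball 0 1) y * Pker s X y * exp (\<alpha> * u y) \<partial>lborel)"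

lemma ball_mass_integrable:
  fixes x :: "'a::euclidean_space"
  assumes s: "s > 0" and t: "t > 0"
  shows "integrable lborel (\<lambda>y. indicator (ball 0 1) y * Pker s (x, t) y)"
proof -
  have "set_integrable lborel (ball (0::'a) 1) (\<lambda>_. 1::real)"
    unfolding set_integrable_def
    by (simp add: integrable_real_indicator emeasure_lborel_ball_finite[unfolded infinity_ennreal_def])
  from Pker_indicator_integrable[OF s t this, of x] show ?thesis by simp
qed

lemma ball_mass_le_1:
  fixes x :: "'a::euclidean_space"
  assumes s: "s > 0" and t: "t > 0"
  shows "ball_mass s (x, t) \<le> 1"
proof -
  have "ennreal (ball_mass s (x, t)) = (\<integral>\<^sup>+y. ennreal (indicator (ball 0 1) y * Pker s (x, t) y) \<partial>lborel)"
    unfolding ball_mass_def using ball_mass_integrable[OF s t, of x] Pker_nonneg[OF s, of "(x, t)"]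
    by (intro nn_integral_eq_integral[symmetric]) auto
  also have "\<dots> \<le> (\<integral>\<^sup>+y. ennreal (Pker s (x, t) y) \<partial>lborel)"
    by (intro nn_integral_mono) (auto simp: indicator_def)
  also have "\<dots> = 1"
    by (rule nn_integral_Pker_y[OF s t])
  finally show ?thesis by simp
qed

lemma ball_mass_ge:
  fixes x :: "'a::euclidean_space"
  assumes s: "s > 0" and t: "t > 0" and \<rho>: "0 < \<rho>" "\<rho> \<le> t" and sub: "ball x \<rho> \<subseteq> ball 0 1"
  shows "d_const s TYPE('a) * (t powr (2 * s) / (sqrt 2 * t) powr (real DIM('a) + 2 * s))
      * (unit_ball_vol (real DIM('a)) * \<rho> ^ DIM('a)) \<le> ball_mass s (x, t)"
proof -
  define K where "K = d_const s TYPE('a) * (t powr (2 * s) / (sqrt 2 * t) powr (real DIM('a) + 2 * s))"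
  have "K * indicator (ball x \<rho>) y \<le> indicator (ball 0 1) y * Pker s (x, t) y" for y
  proof (cases "y \<in> ball x \<rho>")
    case True
    then have "K \<le> Pker s (x, t) y"
      unfolding K_def Pker_def using \<rho> P0_ge_near[OF t s, of y x] d_const_pos[OF s, where 'a='a]
      by (intro mult_left_mono) auto
    then show ?thesis using True sub by auto
  next
    case False
    then show ?thesis using Pker_nonneg[OF s, of "(x, t)" y] by simp
  qed
  then have "(\<integral>y. K * indicator (ball x \<rho>) y \<partial>lborel) \<le> ball_mass s (x, t)"
    unfolding ball_mass_def using ball_mass_integrable[OF s t, of x]
    by (intro integral_mono integrable_mult_right integrable_real_indicator)
      (auto simp: emeasure_lborel_ball_finite[unfolded infinity_ennreal_def])
  then show ?thesis
    using \<rho> by (simp add: K_def content_ball)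
qed

lemma ball_mass_pos:
  fixes x :: "'a::euclidean_space"
  assumes s: "s > 0" and t: "t > 0" and r: "r < 1" and x: "norm x \<le> r"
  shows "0 < ball_mass s (x, t)"
proof -
  define \<rho> where "\<rho> = min t (1 - r)"
  have \<rho>: "0 < \<rho>" "\<rho> \<le> t" using t r by (auto simp: \<rho>_def)
  have "ball x \<rho> \<subseteq> ball 0 1"
  proof
    fix y assume "y \<in> ball x \<rho>"
    then have "norm (y - x) < 1 - r" by (simp add: \<rho>_def dist_norm norm_minus_commute)
    then show "y \<in> ball 0 1" using x norm_triangle_ineq[of x "y - x"] by simp
  qed
  moreover have "0 < d_const s TYPE('a) * (t powr (2 * s) / (sqrt 2 * t) powr (real DIM('a) + 2 * s))
      * (unit_ball_vol (real DIM('a)) * \<rho> ^ DIM('a))"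
    using d_const_pos[OF s, where 'a='a] t \<rho> by (intro mult_pos_pos divide_pos_pos) auto
  ultimately show ?thesis
    using ball_mass_ge[OF s t \<rho>] by (meson less_le_trans)
qed

lemma ball_mass_ge_const:
  fixes x :: "'a::euclidean_space"
  assumes s: "s > 0" and t: "t > 0" and sub: "ball x t \<subseteq> ball 0 1"
  shows "d_const s TYPE('a) * unit_ball_vol (real DIM('a)) / sqrt 2 powr (real DIM('a) + 2 * s)
    \<le> ball_mass s (x, t)"
proof -
  let ?p = "real DIM('a) + 2 * s"
  have "(sqrt 2 * t) powr ?p = sqrt 2 powr ?p * (t ^ DIM('a) * t powr (2 * s))"
    using t by (simp add: powr_mult powr_add powr_realpow)
  then have "t powr (2 * s) / (sqrt 2 * t) powr ?p * (unit_ball_vol (real DIM('a)) * t ^ DIM('a))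
      = unit_ball_vol (real DIM('a)) / sqrt 2 powr ?p"
    using t by (simp add: field_simps)
  moreover have "d_const s TYPE('a) * (t powr (2 * s) / (sqrt 2 * t) powr ?p
      * (unit_ball_vol (real DIM('a)) * t ^ DIM('a))) \<le> ball_mass s (x, t)"
    using ball_mass_ge[OF s t t order.refl sub] by (simp only: mult.assoc)
  ultimately show ?thesis
    by (simp only: times_divide_eq_right)
qed

lemma nn_integral_Pker_outside_ball_le:
  fixes x :: "'a::euclidean_space"
  assumes s: "s > 0" and t: "t > 0" and r: "0 \<le> r" "r < 1" and x: "norm x \<le> r"
  shows "(\<integral>\<^sup>+y. ennreal ((1 - indicator (ball 0 1) y) * Pker s (x, t) y) \<partial>lborel)
    \<le> ennreal ((sqrt 2 / (1 - r)) powr (real DIM('a) + 2 * s) * t powr (2 * s))"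
proof -
  define \<kappa> where "\<kappa> = (sqrt 2 / (1 - r)) powr (real DIM('a) + 2 * s) * t powr (2 * s)"
  have d: "d_const s TYPE('a) > 0" by (rule d_const_pos[OF s])
  have "ennreal ((1 - indicator (ball 0 1) y) * Pker s (x, t) y)
      \<le> ennreal (d_const s TYPE('a) * \<kappa>) * ennreal (P0 s (0, 1) y)" for y
  proof (cases "y \<in> ball 0 1")
    case False
    then have "(1 - indicator (ball 0 1) y) * Pker s (x, t) y \<le> d_const s TYPE('a) * (\<kappa> * P0 s (0, 1) y)"
      using P0_le_far[OF t s r x, of y] d by (simp add: Pker_def \<kappa>_def)
    then show ?thesis
      using d P0_nonneg[of s "(0::'a, 1)" y] by (simp add: \<kappa>_def ennreal_leI flip: ennreal_mult)
  qed simp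
  then have "(\<integral>\<^sup>+y. ennreal ((1 - indicator (ball 0 1) y) * Pker s (x, t) y) \<partial>lborel)
      \<le> (\<integral>\<^sup>+y. ennreal (d_const s TYPE('a) * \<kappa>) * ennreal (P0 s (0::'a, 1) y) \<partial>lborel)"
    by (intro nn_integral_mono)
  also have "\<dots> = ennreal (d_const s TYPE('a) * \<kappa>) * (\<integral>\<^sup>+y. ennreal (P0 s (0::'a, 1) y) \<partial>lborel)"
    by (rule nn_integral_cmult) measurable
  also have "\<dots> = ennreal \<kappa>"
    using d integral_P0_origin_pos[OF s, where 'a='a]
    by (simp add: nn_integral_P0_origin[OF s] d_const_def \<kappa>_def flip: ennreal_mult)
  finally show ?thesis by (simp add: \<kappa>_def)
qed

lemma ball_mass_ge_1_minus:
  fixes x :: "'a::euclidean_space"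
  assumes s: "s > 0" and t: "t > 0" and r: "0 \<le> r" "r < 1" and x: "norm x \<le> r"
  shows "1 - (sqrt 2 / (1 - r)) powr (real DIM('a) + 2 * s) * t powr (2 * s) \<le> ball_mass s (x, t)"
proof -
  let ?B = "ball (0::'a) 1"
  define \<kappa> where "\<kappa> = (sqrt 2 / (1 - r)) powr (real DIM('a) + 2 * s) * t powr (2 * s)"
  have "ennreal 1 = (\<integral>\<^sup>+y. ennreal (Pker s (x, t) y) \<partial>lborel)"
    using nn_integral_Pker_y[OF s t, of x] by simp
  also have "\<dots> = (\<integral>\<^sup>+y. ennreal (indicator ?B y * Pker s (x, t) y) + ennreal ((1 - indicator ?B y) * Pker s (x, t) y) \<partial>lborel)"
    using Pker_nonneg[OF s, of "(x, t)"] by (intro nn_integral_cong) (auto simp: indicator_def)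
  also have "\<dots> = ennreal (ball_mass s (x, t)) + (\<integral>\<^sup>+y. ennreal ((1 - indicator ?B y) * Pker s (x, t) y) \<partial>lborel)"
    unfolding ball_mass_def using ball_mass_integrable[OF s t, of x] Pker_nonneg[OF s, of "(x, t)"]
    by (subst nn_integral_add) (auto simp: nn_integral_eq_integral)
  also have "\<dots> \<le> ennreal (ball_mass s (x, t)) + ennreal \<kappa>"
    using nn_integral_Pker_outside_ball_le[OF s t r x] by (simp add: \<kappa>_def add_left_mono)
  also have "\<dots> = ennreal (ball_mass s (x, t) + \<kappa>)"
    using ball_mass_pos[OF s t r(2) x] by (simp add: \<kappa>_def)
  finally have "1 \<le> ball_mass s (x, t) + \<kappa>"
    using ball_mass_pos[OF s t r(2) x] by (subst (asm) ennreal_le_iff) (auto simp: \<kappa>_def)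
  then show ?thesis by (simp add: \<kappa>_def)
qed

lemma ball_exp_mass_nonneg: "s > 0 \<Longrightarrow> 0 \<le> ball_exp_mass s \<alpha> u (X::'a::euclidean_space \<times> real)"
  unfolding ball_exp_mass_def using Pker_nonneg[of s X] by (intro integral_nonneg_AE) auto

lemma ball_exp_mass_nn_integral:
  fixes x :: "'a::euclidean_space"
  assumes s: "s > 0" and t: "t > 0" and e: "set_integrable lborel (ball 0 1) (\<lambda>x. exp (\<alpha> * u x))"
  shows "ennreal (ball_exp_mass s \<alpha> u (x, t))
    = (\<integral>\<^sup>+y. ennreal (indicator (ball 0 1) y * exp (\<alpha> * u y)) * ennreal (Pker s (x, t) y) \<partial>lborel)"
proof -
  have "ennreal (ball_exp_mass s \<alpha> u (x, t))
      = (\<integral>\<^sup>+y. ennreal (indicator (ball 0 1) y * Pker s (x, t) y * exp (\<alpha> * u y)) \<partial>lborel)"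
    unfolding ball_exp_mass_def using Pker_indicator_integrable[OF s t e, of x] Pker_nonneg[OF s, of "(x, t)"]
    by (intro nn_integral_eq_integral[symmetric]) auto
  also have "\<dots> = (\<integral>\<^sup>+y. ennreal (indicator (ball 0 1) y * exp (\<alpha> * u y)) * ennreal (Pker s (x, t) y) \<partial>lborel)"
    using Pker_nonneg[OF s, of "(x, t)"] by (intro nn_integral_cong) (simp add: ennreal_mult'[symmetric] mult_ac)
  finally show ?thesis .
qed

lemma ball_exp_mass_measurable:
  assumes [measurable]: "u \<in> borel_measurable borel"
  shows "ball_exp_mass s \<alpha> u \<in> borel_measurable (lborel :: ('a::euclidean_space \<times> real) measure)"
proof -
  have "(\<lambda>(X, y). indicator (ball 0 1) y * Pker s X y * exp (\<alpha> * u y))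
      \<in> borel_measurable ((lborel :: ('a \<times> real) measure) \<Otimes>\<^sub>M lborel)"
    by measurable
  then show ?thesis
    unfolding ball_exp_mass_def[abs_def] by (rule lborel.borel_measurable_lebesgue_integral)
qed

section \<open>A pointwise bound for the extension\<close>

definition tail_const :: "real \<Rightarrow> real \<Rightarrow> 'a::euclidean_space itself \<Rightarrow> real" where
  "tail_const s r _ = 2 * d_const s TYPE('a) * (sqrt 2 / (1 - r)) powr (real DIM('a) + 2 * s)"

lemma tail_const_nonneg: "s > 0 \<Longrightarrow> 0 \<le> tail_const s r TYPE('a::euclidean_space)"
  unfolding tail_const_def using d_const_pos[of s, where 'a='a] by simp

lemma Pker_le_tail:
  fixes x y :: "'a::euclidean_space"
  assumes t: "t > 0" and s: "s > 0" and r: "0 \<le> r" "r < 1" and x: "norm x \<le> r" and y: "norm y \<ge> 1"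
  shows "Pker s (x, t) y \<le> tail_const s r TYPE('a) * t powr (2 * s) / Ls_weight s y"
proof -
  define \<kappa> where "\<kappa> = (sqrt 2 / (1 - r)) powr (real DIM('a) + 2 * s) * t powr (2 * s)"
  have "P0 s (x, t) y \<le> \<kappa> * P0 s (0, 1) y"
    using P0_le_far[OF t s r x y] by (simp add: \<kappa>_def)
  also have "\<dots> \<le> \<kappa> * (2 / Ls_weight s y)"
    using P0_origin_le_Ls_weight[OF s, of y] by (intro mult_left_mono) (auto simp: \<kappa>_def)
  finally have "d_const s TYPE('a) * P0 s (x, t) y \<le> d_const s TYPE('a) * (\<kappa> * (2 / Ls_weight s y))"
    using d_const_pos[OF s, where 'a='a] by (intro mult_left_mono) auto
  then show ?thesis
    by (simp add: Pker_def tail_const_def \<kappa>_def mult_ac)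
qed

lemma ext_outside_ball_le:
  fixes x :: "'a::euclidean_space"
  assumes s: "s > 0" and t: "t > 0" and r: "0 \<le> r" "r < 1" and x: "norm x \<le> r" and u: "in_Ls s u"
  shows "(\<integral>y. (1 - indicator (ball 0 1) y) * (Pker s (x, t) y * u y) \<partial>lborel)
    \<le> tail_const s r TYPE('a) * t powr (2 * s) * Ls_norm s (pos_part u)"
proof -
  define K where "K = tail_const s r TYPE('a) * t powr (2 * s)"
  have K: "K \<ge> 0" unfolding K_def using tail_const_nonneg[OF s, of r, where 'a='a] by simp
  have iP: "integrable lborel (\<lambda>y. Pker s (x, t) y * u y)"
    by (rule Pker_mult_integrable[OF s t u])
  have "(\<integral>y. (1 - indicator (ball 0 1) y) * (Pker s (x, t) y * u y) \<partial>lborel)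
      \<le> (\<integral>y. K * (pos_part u y / Ls_weight s y) \<partial>lborel)"
  proof (rule integral_mono)
    show "integrable lborel (\<lambda>y. (1 - indicator (ball 0 1) y) * (Pker s (x, t) y * u y))"
      using iP integrable_mult_indicator[OF _ iP, of "ball 0 1"]
      by (simp add: left_diff_distrib Bochner_Integration.integrable_diff)
    show "integrable lborel (\<lambda>y. K * (pos_part u y / Ls_weight s y))"
      using in_Ls_pos_part_integrable[OF u] by (rule integrable_mult_right)
  next
    fix y :: 'a
    have pp: "u y \<le> pos_part u y" "0 \<le> pos_part u y" by (auto simp: pos_part_def)
    show "(1 - indicator (ball 0 1) y) * (Pker s (x, t) y * u y) \<le> K * (pos_part u y / Ls_weight s y)"
    proof (cases "y \<in> ball 0 1")
      case True
      then show ?thesis using K pp Ls_weight_pos[of s y] by simp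
    next
      case False
      then have "Pker s (x, t) y \<le> K / Ls_weight s y"
        using Pker_le_tail[OF t s r x] by (simp add: K_def)
      then have "Pker s (x, t) y * u y \<le> K / Ls_weight s y * pos_part u y"
        using pp Pker_nonneg[OF s, of "(x, t)" y]
        by (meson mult_left_mono mult_right_mono order_trans)
      then show ?thesis using False by simp
    qed
  qed
  also have "\<dots> = K * Ls_norm s (pos_part u)"
    by (simp only: integral_mult_right_zero Ls_norm_pos_part)
  finally show ?thesis
    by (simp add: K_def)
qed

lemma exp_inside_ball_le:
  fixes x :: "'a::euclidean_space"
  assumes s: "s > 0" and t: "t > 0" and r: "r < 1" and x: "norm x \<le> r" and u: "in_Ls s u"
    and e: "set_integrable lborel (ball 0 1) (\<lambda>x. exp (\<alpha> * u x))"
  shows "exp (\<alpha> * (\<integral>y. indicator (ball 0 1) y * (Pker s (x, t) y * u y) \<partial>lborel))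
    \<le> (ball_exp_mass s \<alpha> u (x, t) / ball_mass s (x, t)) powr ball_mass s (x, t)"
proof -
  define m where "m = ball_mass s (x, t)"
  define I where "I = (\<integral>y. indicator (ball 0 1) y * (Pker s (x, t) y * u y) \<partial>lborel)"
  have m: "m > 0" unfolding m_def by (rule ball_mass_pos[OF s t r x])
  have "exp (\<alpha> * (I / m)) \<le> ball_exp_mass s \<alpha> u (x, t) / m"
    using Jensen_exp[where k="\<lambda>y. indicator (ball 0 1) y * Pker s (x, t) y" and f=u and M=lborel and \<alpha>=\<alpha>]
      Pker_nonneg[OF s, of "(x, t)"] ball_mass_integrable[OF s t, of x]
      integrable_mult_indicator[OF _ Pker_mult_integrable[OF s t u], of "ball 0 1" x]
      Pker_indicator_integrable[OF s t e, of x] m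
    by (simp add: I_def m_def ball_mass_def ball_exp_mass_def mult_ac)
  then have "exp (\<alpha> * (I / m)) powr m \<le> (ball_exp_mass s \<alpha> u (x, t) / m) powr m"
    using m by (intro powr_mono2) auto
  moreover have "exp (\<alpha> * (I / m)) powr m = exp (\<alpha> * I)"
    using m by (simp add: powr_def)
  ultimately show ?thesis by (simp add: I_def m_def)
qed

lemma exp_ext_le:
  fixes x :: "'a::euclidean_space"
  assumes s: "s > 0" and t: "t > 0" and r: "0 \<le> r" "r < 1" and x: "norm x \<le> r"
    and u: "in_Ls s u" and \<alpha>: "\<alpha> > 0"
    and e: "set_integrable lborel (ball 0 1) (\<lambda>x. exp (\<alpha> * u x))"
  shows "exp (\<alpha> * ext s u (x, t))
    \<le> (ball_exp_mass s \<alpha> u (x, t) / ball_mass s (x, t)) powr ball_mass s (x, t)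
      * exp (\<alpha> * (tail_const s r TYPE('a) * t powr (2 * s) * Ls_norm s (pos_part u)))"
proof -
  let ?B = "ball (0::'a) 1" and ?Pu = "\<lambda>y. Pker s (x, t) y * u y"
  define I1 where "I1 = (\<integral>y. indicator ?B y * ?Pu y \<partial>lborel)"
  define I2 where "I2 = (\<integral>y. (1 - indicator ?B y) * ?Pu y \<partial>lborel)"
  have iP: "integrable lborel ?Pu"
    by (rule Pker_mult_integrable[OF s t u])
  have i1: "integrable lborel (\<lambda>y. indicator ?B y * ?Pu y)"
    using integrable_mult_indicator[OF _ iP, of ?B] by simp
  have "ext s u (x, t) = (\<integral>y. indicator ?B y * ?Pu y + (1 - indicator ?B y) * ?Pu y \<partial>lborel)"
    unfolding ext_def by (simp add: algebra_simps)
  also have "\<dots> = I1 + I2"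
    unfolding I1_def I2_def using iP i1
    by (intro Bochner_Integration.integral_add) (simp_all add: left_diff_distrib)
  finally have "exp (\<alpha> * ext s u (x, t)) = exp (\<alpha> * I1) * exp (\<alpha> * I2)"
    by (simp add: distrib_left exp_add)
  also have "\<dots> \<le> (ball_exp_mass s \<alpha> u (x, t) / ball_mass s (x, t)) powr ball_mass s (x, t)
      * exp (\<alpha> * (tail_const s r TYPE('a) * t powr (2 * s) * Ls_norm s (pos_part u)))"
    using exp_inside_ball_le[OF s t r(2) x u e] ext_outside_ball_le[OF s t r x u] \<alpha>
    by (intro mult_mono) (auto simp: I1_def I2_def)
  finally show ?thesis .
qed

lemma ext_measurable:
  assumes u: "in_Ls s u"
  shows "ext s u \<in> borel_measurable (lborel :: ('a::euclidean_space \<times> real) measure)"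
proof -
  have [measurable]: "u \<in> borel_measurable borel" using in_Ls_measurable[OF u] .
  have "(\<lambda>p. Pker s (fst p) (snd p) * u (snd p)) \<in> borel_measurable ((lborel :: ('a \<times> real) measure) \<Otimes>\<^sub>M lborel)"
    by measurable
  then show ?thesis
    using lborel.borel_measurable_lebesgue_integral[of "\<lambda>X y. Pker s X y * u y" lborel]
    by (simp add: case_prod_beta ext_def[abs_def])
qed

lemma wexp_le:
  fixes x :: "'a::euclidean_space"
  assumes s: "s > 0" and t: "0 < t" "t \<le> T" and r: "0 \<le> r" "r < 1" and x: "norm x \<le> r"
    and u: "in_Ls s u" and \<alpha>: "\<alpha> > 0" and e: "set_integrable lborel (ball 0 1) (\<lambda>x. exp (\<alpha> * u x))"
  shows "wexp s \<alpha> u (x, t) \<le> exp 1 * exp (\<alpha> * (tail_const s r TYPE('a) * T powr (2 * s) * \<bar>Ls_norm s (pos_part u)\<bar>))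
    * t powr (1 - 2 * s) * ball_exp_mass s \<alpha> u (x, t) powr ball_mass s (x, t)"
proof -
  define g where "g = ball_exp_mass s \<alpha> u (x, t)"
  define m where "m = ball_mass s (x, t)"
  define N where "N = Ls_norm s (pos_part u)"
  have g: "g \<ge> 0"
    unfolding g_def by (rule ball_exp_mass_nonneg[OF s])
  have m: "m > 0" unfolding m_def by (rule ball_mass_pos[OF s t(1) r(2) x])
  have "t powr (2 * s) * N \<le> t powr (2 * s) * \<bar>N\<bar>"
    by (intro mult_left_mono) auto
  also have "\<dots> \<le> T powr (2 * s) * \<bar>N\<bar>"
    using t s by (intro mult_right_mono powr_mono2) auto
  finally have "tail_const s r TYPE('a) * t powr (2 * s) * N \<le> tail_const s r TYPE('a) * T powr (2 * s) * \<bar>N\<bar>"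
    using tail_const_nonneg[OF s, of r, where 'a='a] by (simp add: mult.assoc mult_left_mono)
  then have "exp (\<alpha> * ext s u (x, t)) \<le> (g / m) powr m * exp (\<alpha> * (tail_const s r TYPE('a) * T powr (2 * s) * \<bar>N\<bar>))"
    using exp_ext_le[OF s t(1) r x u \<alpha> e] \<alpha>
    by (smt (verit) exp_le_cancel_iff g_def m_def mult_left_mono N_def powr_ge_zero)
  also have "\<dots> \<le> exp 1 * g powr m * exp (\<alpha> * (tail_const s r TYPE('a) * T powr (2 * s) * \<bar>N\<bar>))"
    using powr_divide_exponent_le[OF m g] by (intro mult_right_mono) auto
  finally show ?thesis
    using t by (simp add: wexp_def g_def m_def N_def mult_left_mono mult_ac)
qed

lemma wexp_le_affine:
  fixes x :: "'a::euclidean_space"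
  assumes s: "s > 0" and t: "0 \<le> t" "t \<le> T" and r: "0 \<le> r" "r < 1" and x: "norm x \<le> r"
    and u: "in_Ls s u" and \<alpha>: "\<alpha> > 0" and e: "set_integrable lborel (ball 0 1) (\<lambda>x. exp (\<alpha> * u x))"
    and mass: "t > 0 \<Longrightarrow> ball_exp_mass s \<alpha> u (x, t) powr ball_mass s (x, t) \<le> a1 * ball_exp_mass s \<alpha> u (x, t) + a0"
  shows "wexp s \<alpha> u (x, t) \<le> exp 1 * exp (\<alpha> * (tail_const s r TYPE('a) * T powr (2 * s) * \<bar>Ls_norm s (pos_part u)\<bar>))
    * (a1 * (t powr (1 - 2 * s) * ball_exp_mass s \<alpha> u (x, t)) + a0 * t powr (1 - 2 * s))"
proof (cases "t = 0")
  case False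
  define E where "E = exp 1 * exp (\<alpha> * (tail_const s r TYPE('a) * T powr (2 * s) * \<bar>Ls_norm s (pos_part u)\<bar>))"
  have t0: "t > 0" using t False by simp
  have "wexp s \<alpha> u (x, t) \<le> E * t powr (1 - 2 * s) * ball_exp_mass s \<alpha> u (x, t) powr ball_mass s (x, t)"
    using wexp_le[OF s t0 t(2) r x u \<alpha> e] by (simp add: E_def)
  also have "\<dots> \<le> E * t powr (1 - 2 * s) * (a1 * ball_exp_mass s \<alpha> u (x, t) + a0)"
    using mass[OF t0] by (intro mult_left_mono) (auto simp: E_def)
  finally show ?thesis
    by (simp add: E_def algebra_simps)
qed (simp add: wexp_def) \<comment> \<open>\<open>wexp\<close> vanishes at \<open>t = 0\<close> since \<open>0 powr (1 - 2 * s) = 0\<close>\<close>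

section \<open>Integration over half-cylinders\<close>

lemma nn_integral_powr_interval:
  assumes a: "a > -1" and T: "T \<ge> 0"
  shows "(\<integral>\<^sup>+t. ennreal (t powr a) * indicator {0..T} t \<partial>lborel) = ennreal (T powr (a + 1) / (a + 1))"
proof -
  have "((\<lambda>t. t powr a) has_integral (T powr (a + 1) / (a + 1))) {0..T}"
    using a T by (intro has_integral_powr_from_0) auto
  then show ?thesis
    by (intro nn_integral_has_integral_lebesgue') auto
qed

lemma cylinder_weight_measurable [measurable]:
  "(\<lambda>X. indicator (cball (0::'a::euclidean_space) r \<times> {0..T}) X * ennreal (snd X powr a)) \<in> borel_measurable lborel"
proof -
  have [measurable]: "cball (0::'a) r \<times> {0..T} \<in> sets (lborel \<Otimes>\<^sub>M lborel)"
    by (intro pair_measureI) auto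
  show ?thesis by (simp only: lborel_prod[symmetric]) measurable
qed

lemma nn_integral_kernel_Tonelli_le:
  fixes w :: "'a::euclidean_space \<times> real \<Rightarrow> ennreal" and h :: "'a \<Rightarrow> ennreal"
  assumes [measurable]: "w \<in> borel_measurable lborel" "h \<in> borel_measurable lborel"
    and W: "\<And>y. (\<integral>\<^sup>+X. w X * ennreal (Pker s X y) \<partial>lborel) \<le> W"
  shows "(\<integral>\<^sup>+X. w X * (\<integral>\<^sup>+y. h y * ennreal (Pker s X y) \<partial>lborel) \<partial>lborel) \<le> W * (\<integral>\<^sup>+y. h y \<partial>lborel)"
proof -
  have wm [measurable]: "w \<in> borel_measurable (lborel \<Otimes>\<^sub>M lborel)"
    by (simp only: lborel_prod) measurable
  have "(\<integral>\<^sup>+X. w X * (\<integral>\<^sup>+y. h y * ennreal (Pker s X y) \<partial>lborel) \<partial>lborel)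
      = (\<integral>\<^sup>+X. (\<integral>\<^sup>+y. w X * (h y * ennreal (Pker s X y)) \<partial>lborel) \<partial>lborel)"
    by (intro nn_integral_cong nn_integral_cmult[symmetric]) measurable
  also have "\<dots> = (\<integral>\<^sup>+y. (\<integral>\<^sup>+X. w X * (h y * ennreal (Pker s X y)) \<partial>lborel) \<partial>lborel)"
  proof -
    have "(\<lambda>(X, y). w X * (h y * ennreal (Pker s X y))) \<in> borel_measurable (lborel \<Otimes>\<^sub>M lborel)"
      by measurable
    then show ?thesis by (rule lborel_pair.Fubini'[symmetric])
  qed
  also have "\<dots> = (\<integral>\<^sup>+y. h y * (\<integral>\<^sup>+X. w X * ennreal (Pker s X y) \<partial>lborel) \<partial>lborel)"
  proof (intro nn_integral_cong)
    fix y
    have "(\<integral>\<^sup>+X. w X * (h y * ennreal (Pker s X y)) \<partial>lborel) = (\<integral>\<^sup>+X. h y * (w X * ennreal (Pker s X y)) \<partial>lborel)"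
      by (simp add: mult_ac)
    also have "\<dots> = h y * (\<integral>\<^sup>+X. w X * ennreal (Pker s X y) \<partial>lborel)"
      by (rule nn_integral_cmult) measurable
    finally show "(\<integral>\<^sup>+X. w X * (h y * ennreal (Pker s X y)) \<partial>lborel) = \<dots>" .
  qed
  also have "\<dots> \<le> (\<integral>\<^sup>+y. h y * W \<partial>lborel)"
    by (intro nn_integral_mono mult_left_mono W) simp
  also have "\<dots> = W * (\<integral>\<^sup>+y. h y \<partial>lborel)"
    by (subst nn_integral_multc) (simp_all add: mult.commute)
  finally show ?thesis .
qed

lemma nn_integral_cylinder_weight:
  fixes A :: "'a::euclidean_space set"
  assumes A: "A \<in> sets lborel" and a: "a > -1" and T: "T \<ge> 0"
  shows "(\<integral>\<^sup>+X. indicator (A \<times> {0..T}) X * ennreal (snd X powr a) \<partial>lborel)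
    = emeasure lborel A * ennreal (T powr (a + 1) / (a + 1))"
proof -
  have [measurable]: "A \<times> {0..T} \<in> sets (lborel \<Otimes>\<^sub>M lborel)"
    using A by (intro pair_measureI) auto
  have "(\<lambda>X. indicator (A \<times> {0..T}) X * ennreal (snd X powr a)) \<in> borel_measurable (lborel \<Otimes>\<^sub>M lborel)"
    by measurable
  from lborel_pair.nn_integral_snd[OF this]
  have "(\<integral>\<^sup>+X. indicator (A \<times> {0..T}) X * ennreal (snd X powr a) \<partial>lborel)
      = (\<integral>\<^sup>+t. (\<integral>\<^sup>+x. indicator (A \<times> {0..T}) (x, t) * ennreal (t powr a) \<partial>lborel) \<partial>lborel)"
    by (simp add: lborel_prod)
  also have "\<dots> = (\<integral>\<^sup>+t. (ennreal (t powr a) * indicator {0..T} t) * emeasure lborel A \<partial>lborel)"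
  proof (intro nn_integral_cong)
    fix t :: real
    have "(\<integral>\<^sup>+x. indicator (A \<times> {0..T}) (x, t) * ennreal (t powr a) \<partial>lborel)
        = (\<integral>\<^sup>+x. (ennreal (t powr a) * indicator {0..T} t) * indicator A x \<partial>lborel)"
      by (intro nn_integral_cong) (auto simp: indicator_def)
    also have "\<dots> = (ennreal (t powr a) * indicator {0..T} t) * emeasure lborel A"
      using A by (rule nn_integral_cmult_indicator)
    finally show "(\<integral>\<^sup>+x. indicator (A \<times> {0..T}) (x, t) * ennreal (t powr a) \<partial>lborel) = \<dots>" .
  qed
  also have "\<dots> = (\<integral>\<^sup>+t. ennreal (t powr a) * indicator {0..T} t \<partial>lborel) * emeasure lborel A"
    by (rule nn_integral_multc) measurable
  also have "\<dots> = emeasure lborel A * ennreal (T powr (a + 1) / (a + 1))"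
    by (simp add: nn_integral_powr_interval[OF a T] mult.commute)
  finally show ?thesis .
qed

lemma nn_integral_cylinder_weight_Pker_le:
  fixes A :: "'a::euclidean_space set"
  assumes s: "s > 0" and A: "A \<in> sets lborel" and a: "a > -1" and T: "T \<ge> 0"
  shows "(\<integral>\<^sup>+X. indicator (A \<times> {0..T}) X * ennreal (snd X powr a) * ennreal (Pker s X y) \<partial>lborel)
    \<le> ennreal (T powr (a + 1) / (a + 1))"
proof -
  have [measurable]: "A \<times> {0..T} \<in> sets (lborel \<Otimes>\<^sub>M lborel)"
    using A by (intro pair_measureI) auto
  have "(\<lambda>X. indicator (A \<times> {0..T}) X * ennreal (snd X powr a) * ennreal (Pker s X y))
      \<in> borel_measurable (lborel \<Otimes>\<^sub>M lborel)"
    by measurable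
  from lborel_pair.nn_integral_snd[OF this]
  have "(\<integral>\<^sup>+X. indicator (A \<times> {0..T}) X * ennreal (snd X powr a) * ennreal (Pker s X y) \<partial>lborel)
      = (\<integral>\<^sup>+t. (\<integral>\<^sup>+x. indicator (A \<times> {0..T}) (x, t) * ennreal (t powr a) * ennreal (Pker s (x, t) y) \<partial>lborel) \<partial>lborel)"
    by (simp add: lborel_prod)
  also have "\<dots> \<le> (\<integral>\<^sup>+t. ennreal (t powr a) * indicator {0..T} t \<partial>lborel)"
  proof (intro nn_integral_mono)
    fix t :: real
    show "(\<integral>\<^sup>+x. indicator (A \<times> {0..T}) (x, t) * ennreal (t powr a) * ennreal (Pker s (x, t) y) \<partial>lborel)
        \<le> ennreal (t powr a) * indicator {0..T} t"
    proof (cases "t \<in> {0..T}")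
      case True
      have "(\<integral>\<^sup>+x. indicator (A \<times> {0..T}) (x, t) * ennreal (t powr a) * ennreal (Pker s (x, t) y) \<partial>lborel)
          \<le> (\<integral>\<^sup>+x. ennreal (t powr a) * ennreal (Pker s (x, t) y) \<partial>lborel)"
        by (intro nn_integral_mono) (auto simp: indicator_def)
      also have "\<dots> = ennreal (t powr a) * (\<integral>\<^sup>+x. ennreal (Pker s (x, t) y) \<partial>lborel)"
        by (rule nn_integral_cmult) measurable
      also have "\<dots> \<le> ennreal (t powr a)"
        using True nn_integral_Pker_x_le[OF s, of t y] mult_left_mono[of _ 1 "ennreal (t powr a)"] by auto
      finally show ?thesis using True by simp
    qed simp
  qed
  also have "\<dots> = ennreal (T powr (a + 1) / (a + 1))"
    by (rule nn_integral_powr_interval[OF a T])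
  finally show ?thesis .
qed

lemma nn_integral_cylinder_ball_exp_mass_le:
  fixes u :: "'a::euclidean_space \<Rightarrow> real"
  assumes s: "0 < s" "s < 1" and u: "in_Ls s u"
    and e: "set_integrable lborel (ball 0 1) (\<lambda>x. exp (\<alpha> * u x))" and T: "T \<ge> 0"
  shows "(\<integral>\<^sup>+X. indicator (cball 0 r \<times> {0..T}) X * ennreal (snd X powr (1 - 2 * s))
      * ennreal (ball_exp_mass s \<alpha> u X) \<partial>lborel) \<le> ennreal (T powr (2 - 2 * s) / (2 - 2 * s) * expL1 \<alpha> u)"
proof -
  define w where "w X = indicator (cball 0 r \<times> {0..T}) X * ennreal (snd X powr (1 - 2 * s))" for X :: "'a \<times> real"
  define h where "h y = ennreal (indicator (ball 0 1) y * exp (\<alpha> * u y))" for y :: 'a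
  have [measurable]: "u \<in> borel_measurable borel" using in_Ls_measurable[OF u] .
  have wm: "w \<in> borel_measurable lborel"
    unfolding w_def[abs_def] by measurable
  have hm: "h \<in> borel_measurable lborel"
    unfolding h_def[abs_def] by measurable
  have "(\<integral>\<^sup>+X. w X * ennreal (ball_exp_mass s \<alpha> u X) \<partial>lborel)
      = (\<integral>\<^sup>+X. w X * (\<integral>\<^sup>+y. h y * ennreal (Pker s X y) \<partial>lborel) \<partial>lborel)"
  proof (intro nn_integral_cong)
    fix X :: "'a \<times> real"
    obtain x t where X: "X = (x, t)" by (cases X)
    show "w X * ennreal (ball_exp_mass s \<alpha> u X) = w X * (\<integral>\<^sup>+y. h y * ennreal (Pker s X y) \<partial>lborel)"
    proof (cases "t > 0")
      case True
      then show ?thesis using ball_exp_mass_nn_integral[OF s(1) True e, of x] by (simp add: X h_def)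
    next
      case False
      \<comment> \<open>for \<open>t = 0\<close> the weight vanishes because \<open>0 powr a = 0\<close>\<close>
      then have "w X = 0" by (auto simp: w_def X indicator_def)
      then show ?thesis by simp
    qed
  qed
  also have "\<dots> \<le> ennreal (T powr (2 - 2 * s) / (2 - 2 * s)) * (\<integral>\<^sup>+y. h y \<partial>lborel)"
  proof (rule nn_integral_kernel_Tonelli_le[OF wm hm])
    have "1 - 2 * s + 1 = 2 - 2 * s" by simp
    then show "(\<integral>\<^sup>+X. w X * ennreal (Pker s X y) \<partial>lborel) \<le> ennreal (T powr (2 - 2 * s) / (2 - 2 * s))" for y
      using nn_integral_cylinder_weight_Pker_le[OF s(1) _ _ T, of "cball 0 r" "1 - 2 * s" y] s
      by (simp add: w_def)
  qed
  also have "\<dots> = ennreal (T powr (2 - 2 * s) / (2 - 2 * s)) * ennreal (expL1 \<alpha> u)"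
    using nn_integral_ball_exp[OF e] by (simp add: h_def ennreal_mult)
  also have "\<dots> = ennreal (T powr (2 - 2 * s) / (2 - 2 * s) * expL1 \<alpha> u)"
    using s expL1_pos[OF u e] by (intro ennreal_mult[symmetric]) auto
  finally show ?thesis by (simp add: w_def)
qed

lemma nn_integral_cylinder_affine_le:
  fixes u :: "'a::euclidean_space \<Rightarrow> real"
  assumes s: "0 < s" "s < 1" and u: "in_Ls s u"
    and e: "set_integrable lborel (ball 0 1) (\<lambda>x. exp (\<alpha> * u x))"
    and r: "0 \<le> r" and T: "T \<ge> 0" and a1: "a1 \<ge> 0" and a0: "a0 \<ge> 0"
  defines "w \<equiv> \<lambda>X. indicator (cball 0 r \<times> {0..T}) X * ennreal (snd X powr (1 - 2 * s))"
  shows "(\<integral>\<^sup>+X. ennreal a1 * (w X * ennreal (ball_exp_mass s \<alpha> u X)) + ennreal a0 * w X \<partial>lborel)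
    \<le> ennreal (T powr (2 - 2 * s) / (2 - 2 * s) * (a1 * expL1 \<alpha> u + a0 * (unit_ball_vol (real DIM('a)) * r ^ DIM('a))))"
proof -
  define W where "W = T powr (2 - 2 * s) / (2 - 2 * s)"
  define V where "V = unit_ball_vol (real DIM('a)) * r ^ DIM('a)"
  define A where "A = expL1 \<alpha> u"
  have [measurable]: "u \<in> borel_measurable borel" using in_Ls_measurable[OF u] .
  have [measurable]: "w \<in> borel_measurable lborel"
    unfolding w_def by measurable
  have [measurable]: "ball_exp_mass s \<alpha> u \<in> borel_measurable lborel"
    by (rule ball_exp_mass_measurable) measurable
  have "(\<integral>\<^sup>+X. ennreal a1 * (w X * ennreal (ball_exp_mass s \<alpha> u X)) + ennreal a0 * w X \<partial>lborel)
      = ennreal a1 * (\<integral>\<^sup>+X. w X * ennreal (ball_exp_mass s \<alpha> u X) \<partial>lborel) + ennreal a0 * (\<integral>\<^sup>+X. w X \<partial>lborel)"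
    by (simp add: nn_integral_cmult nn_integral_add)
  also have "\<dots> \<le> ennreal a1 * ennreal (W * A) + ennreal a0 * (ennreal V * ennreal W)"
  proof -
    have "(\<integral>\<^sup>+X. w X \<partial>lborel) = ennreal V * ennreal W"
      unfolding w_def V_def W_def
      using nn_integral_cylinder_weight[of "cball 0 r" "1 - 2 * s" T] s T r
      by (simp add: emeasure_cball)
    then show ?thesis
      using nn_integral_cylinder_ball_exp_mass_le[OF s u e T, of r]
      by (intro add_mono mult_left_mono) (auto simp: w_def W_def A_def)
  qed
  also have "\<dots> = ennreal (W * (a1 * A + a0 * V))"
  proof -
    have "0 \<le> W" "0 \<le> V" "0 \<le> A"
      using s r expL1_pos[OF u e] by (auto simp: W_def V_def A_def)
    moreover have "0 \<le> a1 * A" "0 \<le> a0 * V"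
      using calculation a1 a0 by auto
    ultimately show ?thesis
      using a1 a0 by (simp add: ennreal_mult[symmetric] ennreal_plus[symmetric] algebra_simps del: ennreal_plus)
  qed
  finally show ?thesis
    by (simp add: W_def V_def A_def)
qed

lemma nn_integral_wexp_le:
  fixes u :: "'a::euclidean_space \<Rightarrow> real" and S :: "('a \<times> real) set"
  assumes s: "0 < s" "s < 1" and u: "in_Ls s u" and \<alpha>: "\<alpha> > 0"
    and e: "set_integrable lborel (ball 0 1) (\<lambda>x. exp (\<alpha> * u x))"
    and r: "0 \<le> r" "r < 1" and T: "T \<ge> 0" and a1: "a1 \<ge> 0" and a0: "a0 \<ge> 0"
    and S: "S \<subseteq> cball 0 r \<times> {0..T}"
    and hpt: "\<And>x t. (x, t) \<in> S \<Longrightarrow> t > 0 \<Longrightarrow>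
      ball_exp_mass s \<alpha> u (x, t) powr ball_mass s (x, t) \<le> a1 * ball_exp_mass s \<alpha> u (x, t) + a0"
  shows "(\<integral>\<^sup>+X. ennreal (indicator S X * wexp s \<alpha> u X) \<partial>lborel)
    \<le> ennreal (exp 1 * exp (\<alpha> * (tail_const s r TYPE('a) * T powr (2 * s) * \<bar>Ls_norm s (pos_part u)\<bar>))
        * (T powr (2 - 2 * s) / (2 - 2 * s)) * (a1 * expL1 \<alpha> u + a0 * (unit_ball_vol (real DIM('a)) * r ^ DIM('a))))"
proof -
  define E where "E = exp 1 * exp (\<alpha> * (tail_const s r TYPE('a) * T powr (2 * s) * \<bar>Ls_norm s (pos_part u)\<bar>))"
  define w where "w X = indicator (cball 0 r \<times> {0..T}) X * ennreal (snd X powr (1 - 2 * s))" for X :: "'a \<times> real"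
  have E: "E > 0" unfolding E_def by simp
  have "ennreal (indicator S X * wexp s \<alpha> u X)
      \<le> ennreal E * (ennreal a1 * (w X * ennreal (ball_exp_mass s \<alpha> u X)) + ennreal a0 * w X)" for X
  proof (cases "X \<in> S")
    case True
    obtain x t where X: "X = (x, t)" by (cases X)
    with True S have x: "norm x \<le> r" and t: "0 \<le> t" "t \<le> T" by auto
    have "ennreal (wexp s \<alpha> u X) \<le> ennreal (E * (a1 * (t powr (1 - 2 * s)
        * ball_exp_mass s \<alpha> u (x, t)) + a0 * t powr (1 - 2 * s)))"
      using wexp_le_affine[OF s(1) t r x u \<alpha> e hpt[OF True[unfolded X]]] by (intro ennreal_leI) (simp add: X E_def)
    also have "\<dots> = ennreal E * (ennreal a1 * (ennreal (t powr (1 - 2 * s))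
        * ennreal (ball_exp_mass s \<alpha> u (x, t))) + ennreal a0 * ennreal (t powr (1 - 2 * s)))"
      using E a1 a0 ball_exp_mass_nonneg[OF s(1), of \<alpha> u "(x, t)"] by (simp add: ennreal_mult)
    finally show ?thesis
      using True S by (auto simp: X w_def)
  qed simp
  then have "(\<integral>\<^sup>+X. ennreal (indicator S X * wexp s \<alpha> u X) \<partial>lborel)
      \<le> (\<integral>\<^sup>+X. ennreal E * (ennreal a1 * (w X * ennreal (ball_exp_mass s \<alpha> u X)) + ennreal a0 * w X) \<partial>lborel)"
    by (intro nn_integral_mono)
  also have "\<dots> = ennreal E * (\<integral>\<^sup>+X. ennreal a1 * (w X * ennreal (ball_exp_mass s \<alpha> u X)) + ennreal a0 * w X \<partial>lborel)"
  proof (rule nn_integral_cmult)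
    have [measurable]: "u \<in> borel_measurable borel" using in_Ls_measurable[OF u] .
    have [measurable]: "ball_exp_mass s \<alpha> u \<in> borel_measurable lborel"
      by (rule ball_exp_mass_measurable) measurable
    show "(\<lambda>X. ennreal a1 * (w X * ennreal (ball_exp_mass s \<alpha> u X)) + ennreal a0 * w X) \<in> borel_measurable lborel"
      unfolding w_def by measurable
  qed
  also have "\<dots> \<le> ennreal E * ennreal (T powr (2 - 2 * s) / (2 - 2 * s)
      * (a1 * expL1 \<alpha> u + a0 * (unit_ball_vol (real DIM('a)) * r ^ DIM('a))))"
    using nn_integral_cylinder_affine_le[OF s u e r(1) T a1 a0] by (intro mult_left_mono) (auto simp: w_def)
  also have "\<dots> = ennreal (E * (T powr (2 - 2 * s) / (2 - 2 * s)
      * (a1 * expL1 \<alpha> u + a0 * (unit_ball_vol (real DIM('a)) * r ^ DIM('a)))))"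
    using E by (subst ennreal_mult') auto
  finally show ?thesis
    by (simp only: E_def mult.assoc)
qed

definition wexp_const :: "real \<Rightarrow> real \<Rightarrow> real \<Rightarrow> 'a::euclidean_space itself \<Rightarrow> real" where
  "wexp_const s \<alpha> N _ = exp 1 * exp (\<alpha> * (tail_const s (1/2) TYPE('a) * (1/2) powr (2 * s) * \<bar>N\<bar>))
     * ((1/2) powr (2 - 2 * s) / (2 - 2 * s)) * (1 + unit_ball_vol (real DIM('a)) * (1/2) ^ DIM('a))"

lemma wexp_const_pos: "s < 1 \<Longrightarrow> 0 < wexp_const s \<alpha> N TYPE('a::euclidean_space)"
  unfolding wexp_const_def by (intro mult_pos_pos add_pos_nonneg divide_pos_pos) auto

lemma wexp_set_integral_le:
  fixes u :: "'a::euclidean_space \<Rightarrow> real" and S :: "('a \<times> real) set"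
  assumes s: "0 < s" "s < 1" and u: "in_Ls s u" and \<alpha>: "\<alpha> > 0"
    and e: "set_integrable lborel (ball 0 1) (\<lambda>x. exp (\<alpha> * u x))"
    and c: "0 < c" "c \<le> 1" and S: "S \<subseteq> cball 0 (1/2) \<times> {0..1/2}"
    and mass: "\<And>x t. (x, t) \<in> S \<Longrightarrow> t > 0 \<Longrightarrow> c \<le> ball_mass s (x, t)"
  shows "(\<integral>X\<in>S. wexp s \<alpha> u X \<partial>lborel) \<le> wexp_const s \<alpha> (Ls_norm s (pos_part u)) TYPE('a) * (expL1 \<alpha> u + expL1 \<alpha> u powr c)"
proof -
  define A where "A = expL1 \<alpha> u"
  define V where "V = unit_ball_vol (real DIM('a)) * (1/2::real) ^ DIM('a)"
  define K where "K = exp 1 * exp (\<alpha> * (tail_const s (1/2) TYPE('a) * (1/2) powr (2 * s) * \<bar>Ls_norm s (pos_part u)\<bar>))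
    * ((1/2) powr (2 - 2 * s) / (2 - 2 * s))"
  have A: "A > 0" unfolding A_def by (rule expL1_pos[OF u e])
  have V: "V \<ge> 0" unfolding V_def by simp
  have K: "K \<ge> 0" unfolding K_def using s by simp
  have hpt: "ball_exp_mass s \<alpha> u (x, t) powr ball_mass s (x, t)
      \<le> (1 + c * A powr (c - 1)) * ball_exp_mass s \<alpha> u (x, t) + A powr c"
    if "(x, t) \<in> S" "t > 0" for x t
    using mass[OF that] ball_mass_le_1[OF s(1) that(2)] c A ball_exp_mass_nonneg[OF s(1)]
    by (intro powr_le_affine_bound) auto
  have "(\<integral>\<^sup>+X. ennreal (indicator S X * wexp s \<alpha> u X) \<partial>lborel)
      \<le> ennreal (K * ((1 + c * A powr (c - 1)) * A + A powr c * V))"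
    using nn_integral_wexp_le[OF s u \<alpha> e _ _ _ _ _ S hpt] c by (simp add: A_def V_def K_def)
  also have "\<dots> \<le> ennreal (K * ((1 + V) * (A + A powr c)))"
  proof (intro ennreal_leI mult_left_mono[OF _ K])
    have "c * A powr c \<le> A powr c" "0 \<le> A * V"
      using A V c by (auto intro: mult_left_le_one_le)
    then have "A + (c + V) * A powr c \<le> (1 + V) * (A + A powr c)"
      by (simp add: algebra_simps)
    moreover have "(1 + c * A powr (c - 1)) * A + A powr c * V = A + (c + V) * A powr c"
      using A by (simp add: powr_diff field_simps)
    ultimately show "(1 + c * A powr (c - 1)) * A + A powr c * V \<le> (1 + V) * (A + A powr c)"
      by simp
  qed
  finally have "(\<integral>\<^sup>+X. ennreal (indicator S X * wexp s \<alpha> u X) \<partial>lborel)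
      \<le> ennreal (wexp_const s \<alpha> (Ls_norm s (pos_part u)) TYPE('a) * (A + A powr c))"
    by (simp add: wexp_const_def K_def V_def mult.assoc)
  then show ?thesis
    unfolding set_lebesgue_integral_def A_def
    using wexp_const_pos[OF s(2), of \<alpha> "Ls_norm s (pos_part u)", where 'a='a] A
    by (intro integral_real_bounded) (auto simp: A_def)
qed

lemma compact_subset_half_cylinder:
  fixes K :: "('a::euclidean_space \<times> real) set"
  assumes K: "compact K" "K \<subseteq> ball 0 1 \<times> {0..}"
  obtains r T where "0 \<le> r" "r < 1" "0 \<le> T" "K \<subseteq> cball 0 r \<times> {0..T}"
proof (cases "K = {}")
  case True
  then show ?thesis using that[of 0 0] by simp
next
  case False
  have "compact ((\<lambda>X. norm (fst X)) ` K)"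
    using K(1) by (intro compact_continuous_image continuous_intros)
  then obtain r where r: "r \<in> (\<lambda>X. norm (fst X)) ` K" and rmax: "\<forall>X\<in>K. norm (fst X) \<le> r"
    using compact_attains_sup[of "(\<lambda>X. norm (fst X)) ` K"] False by auto
  obtain B where B: "\<forall>X\<in>K. norm X \<le> B"
    using compact_imp_bounded[OF K(1)] by (auto simp: bounded_iff)
  have "K \<subseteq> cball 0 r \<times> {0..max B 0}"
  proof
    fix X assume X: "X \<in> K"
    then have "snd X \<le> B"
      using B norm_snd_le[of "snd X" "fst X"] by fastforce
    then show "X \<in> cball 0 r \<times> {0..max B 0}"
      using X rmax K(2) by (cases X) auto
  qed
  moreover have "0 \<le> r" "r < 1" using r K(2) by auto
  ultimately show ?thesis using that[of r "max B 0"] by simp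
qed

lemma wexp_locally_L1:
  fixes u :: "'a::euclidean_space \<Rightarrow> real"
  assumes s: "0 < s" "s < 1" and u: "in_Ls s u" and \<alpha>: "\<alpha> > 0"
    and e: "set_integrable lborel (ball 0 1) (\<lambda>x. exp (\<alpha> * u x))"
  shows "locally_L1_on (wexp s \<alpha> u) (ball 0 1 \<times> {0..})"
  unfolding locally_L1_on_def
proof (intro allI impI, elim conjE)
  fix K :: "('a \<times> real) set"
  assume K: "compact K" "K \<subseteq> ball 0 1 \<times> {0..}"
  obtain r T where r: "0 \<le> r" "r < 1" and T: "0 \<le> T" and KC: "K \<subseteq> cball 0 r \<times> {0..T}"
    using compact_subset_half_cylinder[OF K] .
  have "ball_exp_mass s \<alpha> u (x, t) powr ball_mass s (x, t) \<le> 1 * ball_exp_mass s \<alpha> u (x, t) + 1"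
    if "(x, t) \<in> K" "t > 0" for x t
  proof -
    have "norm x \<le> r" using that KC by auto
    then have "0 < ball_mass s (x, t)" by (rule ball_mass_pos[OF s(1) that(2) r(2)])
    then show ?thesis
      using powr_le_one_add[of "ball_mass s (x, t)" "ball_exp_mass s \<alpha> u (x, t)"]
        ball_mass_le_1[OF s(1) that(2), of x] ball_exp_mass_nonneg[OF s(1), of \<alpha> u "(x, t)"]
      by (simp add: add.commute)
  qed
  from nn_integral_wexp_le[OF s u \<alpha> e r T _ _ KC this]
  have fin: "(\<integral>\<^sup>+X. ennreal (indicator K X * wexp s \<alpha> u X) \<partial>lborel) < \<infinity>"
    by (auto simp: le_less_trans)
  have [measurable]: "ext s u \<in> borel_measurable lborel" "K \<in> sets lborel"
    using ext_measurable[OF u] K(1) by (auto simp: compact_imp_closed)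
  have [measurable]: "(\<lambda>X::'a \<times> real. snd X powr (1 - 2 * s)) \<in> borel_measurable lborel"
    by (simp only: lborel_prod[symmetric]) measurable
  have "(\<lambda>X. indicator K X *\<^sub>R wexp s \<alpha> u X) \<in> borel_measurable lborel"
    unfolding wexp_def by measurable
  then show "set_integrable lborel K (wexp s \<alpha> u)"
    unfolding set_integrable_def
    by (rule integrableI_bounded) (use fin in \<open>simp add: wexp_def abs_mult\<close>)
qed

lemma wexp_Dhalf_bound:
  assumes s: "0 < s" "s < 1"
  shows "\<exists>\<delta>>0. \<forall>\<alpha>>0. \<forall>N. \<exists>C>0. \<forall>u::'a::euclidean_space \<Rightarrow> real.
    in_Ls s u \<and> set_integrable lborel (ball 0 1) (\<lambda>x. exp (\<alpha> * u x)) \<and> Ls_norm s (pos_part u) = N \<longrightarrow>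
    (\<integral>X\<in>Dhalf (1/2). wexp s \<alpha> u X \<partial>lborel) \<le> C * (expL1 \<alpha> u + expL1 \<alpha> u powr \<delta>)"
proof -
  define \<delta> where "\<delta> = min 1 (d_const s TYPE('a) * unit_ball_vol (real DIM('a)) / sqrt 2 powr (real DIM('a) + 2 * s))"
  have \<delta>: "0 < \<delta>" "\<delta> \<le> 1"
    using d_const_pos[OF s(1), where 'a='a] by (auto simp: \<delta>_def)
  have D: "Dhalf (1/2) \<subseteq> cball (0::'a) (1/2) \<times> {0..1/2}"
  proof
    fix X :: "'a \<times> real"
    assume "X \<in> Dhalf (1/2)"
    then show "X \<in> cball 0 (1/2) \<times> {0..1/2}"
      using norm_fst_le[of "fst X" "snd X"] norm_snd_le[of "snd X" "fst X"]
      by (auto simp: Dhalf_def mem_Times_iff)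
  qed
  have mass: "\<delta> \<le> ball_mass s (x, t)" if "(x, t) \<in> Dhalf (1/2)" "t > 0" for x :: 'a and t
  proof -
    have "norm x + t < 1"
      using that norm_fst_le[of x t] norm_snd_le[of t x] by (auto simp: Dhalf_def)
    have "ball x t \<subseteq> ball 0 1"
    proof
      fix y assume "y \<in> ball x t"
      then have "norm (y - x) < t" by (simp add: dist_norm norm_minus_commute)
      then show "y \<in> ball 0 1" using \<open>norm x + t < 1\<close> norm_triangle_ineq[of x "y - x"] by simp
    qed
    from ball_mass_ge_const[OF s(1) that(2) this] show ?thesis
      by (simp add: \<delta>_def)
  qed
  have "\<exists>C>0. \<forall>u::'a \<Rightarrow> real.
      in_Ls s u \<and> set_integrable lborel (ball 0 1) (\<lambda>x. exp (\<alpha> * u x)) \<and> Ls_norm s (pos_part u) = N \<longrightarrow>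
      (\<integral>X\<in>Dhalf (1/2). wexp s \<alpha> u X \<partial>lborel) \<le> C * (expL1 \<alpha> u + expL1 \<alpha> u powr \<delta>)"
    if "\<alpha> > 0" for \<alpha> N
    using wexp_set_integral_le[OF s _ that _ \<delta> D mass] wexp_const_pos[OF s(2), of \<alpha> N, where 'a='a]
    by (intro exI[of _ "wexp_const s \<alpha> N TYPE('a)"]) auto
  then show ?thesis
    using \<delta>(1) by blast
qed

text \<open>Chosen so that the defect (2 sqrt 2)^(n+2s) t^(2s) in \<open>ball_mass_ge_1_minus\<close> (with r = 1/2) is at most \<open>\<delta>0\<close>.\<close>

definition thin_height :: "real \<Rightarrow> 'a::euclidean_space itself \<Rightarrow> real \<Rightarrow> real" where
  "thin_height s _ \<delta>0 = min (1/2) ((\<delta>0 / (2 * sqrt 2) powr (real DIM('a) + 2 * s)) powr (1 / (2 * s)))"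

lemma thin_height_pos: "0 < \<delta>0 \<Longrightarrow> 0 < thin_height s TYPE('a::euclidean_space) \<delta>0"
  unfolding thin_height_def by simp

lemma wexp_thin_cylinder_integral_le:
  fixes u :: "'a::euclidean_space \<Rightarrow> real"
  assumes s: "0 < s" "s < 1" and \<alpha>: "\<alpha> > 0" and u: "in_Ls s u"
    and e: "set_integrable lborel (ball 0 1) (\<lambda>x. exp (\<alpha> * u x))" and \<delta>0: "0 < \<delta>0" "\<delta>0 < 1"
  shows "(\<integral>X\<in>ball (0::'a) (1/2) \<times> {0..thin_height s TYPE('a) \<delta>0}. wexp s \<alpha> u X \<partial>lborel)
    \<le> wexp_const s \<alpha> (Ls_norm s (pos_part u)) TYPE('a) * (expL1 \<alpha> u + expL1 \<alpha> u powr (1 - \<delta>0))"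
proof -
  define \<kappa> where "\<kappa> = (2 * sqrt 2) powr (real DIM('a) + 2 * s)"
  have \<kappa>: "\<kappa> > 0" unfolding \<kappa>_def by simp
  have S: "ball (0::'a) (1/2) \<times> {0..thin_height s TYPE('a) \<delta>0} \<subseteq> cball 0 (1/2) \<times> {0..1/2}"
    by (auto simp: thin_height_def)
  have mass: "1 - \<delta>0 \<le> ball_mass s (x, t)"
    if "(x, t) \<in> ball (0::'a) (1/2) \<times> {0..thin_height s TYPE('a) \<delta>0}" "t > 0" for x t
  proof -
    have "t \<le> (\<delta>0 / \<kappa>) powr (1 / (2 * s))"
      using that by (simp add: thin_height_def \<kappa>_def)
    then have "t powr (2 * s) \<le> ((\<delta>0 / \<kappa>) powr (1 / (2 * s))) powr (2 * s)"
      using that(2) s by (intro powr_mono2) auto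
    also have "\<dots> = \<delta>0 / \<kappa>"
      using s \<delta>0 \<kappa> by (simp add: powr_powr)
    finally have "\<kappa> * t powr (2 * s) \<le> \<delta>0"
      using \<kappa> by (simp add: field_simps)
    moreover have "1 - \<kappa> * t powr (2 * s) \<le> ball_mass s (x, t)"
      using ball_mass_ge_1_minus[OF s(1) that(2), of "1/2" x] that(1) by (simp add: \<kappa>_def mult.commute)
    ultimately show ?thesis by simp
  qed
  show ?thesis
    using wexp_set_integral_le[OF s u \<alpha> e _ _ S mass] \<delta>0 by simp
qed

lemma wexp_thin_cylinder_bound:
  assumes s: "0 < s" "s < 1"
  shows "\<exists>\<epsilon>>0. \<exists>r0::real \<Rightarrow> real. (\<forall>\<delta>0. 0 < \<delta>0 \<and> \<delta>0 < \<epsilon> \<longrightarrow> r0 \<delta>0 > 0) \<and>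
    (\<forall>\<alpha>>0. \<forall>N. \<exists>C>0. \<forall>\<delta>0 (u::'a::euclidean_space \<Rightarrow> real).
      0 < \<delta>0 \<and> \<delta>0 < \<epsilon> \<and> in_Ls s u \<and> set_integrable lborel (ball 0 1) (\<lambda>x. exp (\<alpha> * u x))
      \<and> Ls_norm s (pos_part u) = N \<longrightarrow>
      (\<integral>X\<in>ball (0::'a) (1/2) \<times> {0..r0 \<delta>0}. wexp s \<alpha> u X \<partial>lborel)
        \<le> C * (expL1 \<alpha> u + expL1 \<alpha> u powr (1 - \<delta>0)))"
proof -
  have "\<exists>C>0. \<forall>\<delta>0 (u::'a \<Rightarrow> real).
      0 < \<delta>0 \<and> \<delta>0 < 1 \<and> in_Ls s u \<and> set_integrable lborel (ball 0 1) (\<lambda>x. exp (\<alpha> * u x))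
      \<and> Ls_norm s (pos_part u) = N \<longrightarrow>
      (\<integral>X\<in>ball (0::'a) (1/2) \<times> {0..thin_height s TYPE('a) \<delta>0}. wexp s \<alpha> u X \<partial>lborel)
        \<le> C * (expL1 \<alpha> u + expL1 \<alpha> u powr (1 - \<delta>0))"
    if "\<alpha> > 0" for \<alpha> N
    using wexp_thin_cylinder_integral_le[OF s that] wexp_const_pos[OF s(2), of \<alpha> N, where 'a='a]
    by (intro exI[of _ "wexp_const s \<alpha> N TYPE('a)"]) auto
  then show ?thesis
    using thin_height_pos[where 'a='a] by (intro exI[of _ 1] conjI exI[of _ "thin_height s TYPE('a)"]) auto
qed

theorem lemma3p1:
  fixes s :: real
  assumes "0 < s" "s < 1"
  shows
   "(\<forall>(\<alpha>::real) (u::'a::euclidean_space \<Rightarrow> real).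
       \<alpha> > 0 \<and> in_Ls s u \<and> set_integrable lborel (ball 0 1) (\<lambda>x. exp (\<alpha> * u x)) \<longrightarrow>
       locally_L1_on (wexp s \<alpha> u) (ball (0::'a) 1 \<times> {0..}))
  \<and> (\<exists>\<delta>>0. \<forall>\<alpha>>0. \<forall>N. \<exists>C>0. \<forall>u::'a \<Rightarrow> real.
       in_Ls s u \<and> set_integrable lborel (ball 0 1) (\<lambda>x. exp (\<alpha> * u x))
       \<and> Ls_norm s (pos_part u) = N \<longrightarrow>
       (\<integral>X\<in>Dhalf (1/2). wexp s \<alpha> u X \<partial>lborel)
          \<le> C * (expL1 \<alpha> u + expL1 \<alpha> u powr \<delta>))
  \<and> (\<exists>\<epsilon>>0. \<exists>r0::real \<Rightarrow> real. (\<forall>\<delta>0. 0 < \<delta>0 \<and> \<delta>0 < \<epsilon> \<longrightarrow> r0 \<delta>0 > 0) \<and>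
       (\<forall>\<alpha>>0. \<forall>N. \<exists>C>0. \<forall>\<delta>0 (u::'a \<Rightarrow> real).
          0 < \<delta>0 \<and> \<delta>0 < \<epsilon> \<and>
          in_Ls s u \<and> set_integrable lborel (ball 0 1) (\<lambda>x. exp (\<alpha> * u x))
          \<and> Ls_norm s (pos_part u) = N \<longrightarrow>
          (\<integral>X\<in>ball (0::'a) (1/2) \<times> {0..r0 \<delta>0}. wexp s \<alpha> u X \<partial>lborel)
             \<le> C * (expL1 \<alpha> u + expL1 \<alpha> u powr (1 - \<delta>0))))"
proof (intro conjI)
  show "\<forall>\<alpha> (u::'a \<Rightarrow> real). \<alpha> > 0 \<and> in_Ls s u \<and> set_integrable lborel (ball 0 1) (\<lambda>x. exp (\<alpha> * u x)) \<longrightarrow>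
      locally_L1_on (wexp s \<alpha> u) (ball 0 1 \<times> {0..})"
    using wexp_locally_L1[OF assms] by blast
qed (rule wexp_Dhalf_bound[OF assms] wexp_thin_cylinder_bound[OF assms])+

end
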